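(* Let $\mathrm{SDiv}^+_d(\mathbb G)$ be the closed subscheme of $\mathrm{Div}^+_d(\mathbb G)$ consisting of divisors $D$ with $\lambda^dD=[0]$. Then $\mathcal O_{\mathrm{SDiv}^+_d(\mathbb G)}=\mathcal O_X[[c_2,\dots,c_d]]$, i.e. the restrictions of $c_2,\dots,c_d$ induce an isomorphism $\mathcal O_X[[c_2,\dots,c_d]]\cong\mathcal O_{\mathrm{SDiv}^+_d(\mathbb G)}$.
   Context: $\mathbb G$ is an ordinary formal group over $X=\mathrm{spf}(\mathcal O_X)$ with coordinate $x$, so $\mathcal O_{\mathbb G}=\mathcal O_X[[x]]$, and $x(a+b)=F(x(a),x(b))$ for a formal group law $F$. $\mathrm{Div}^+_d(\mathbb G)=\mathbb G^d/\Sigma_d=\mathrm{spf}(\mathcal O_X[[c_1,\dots,c_d]])$, where $c_k$ is the $k$-th elementary symmetric function in $x_1,\dots,x_d$; the point $\sum_i[a_i]$ has $c_k=\sigma_k(x(a_1),\dots,x(a_d))$. The map $\lambda^d\colon\mathrm{Div}^+_d(\mathbb G)\to\mathrm{Div}^+_1(\mathbb G)=\mathbb G$ sends $\sum_{i=1}^d[a_i]$ to $[a_1+\dots+a_d]$. *)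

theory Defs
  imports "HOL-Library.Poly_Mapping" "HOL-Library.Groups_Big_Fun"
begin

text \<open>Formal power series over a commutative ring in countably many variables
  X 0, X 1, ... : a series is its coefficient function on monomials
  (finitely supported exponent vectors).\<close>

type_synonym mono = "nat \<Rightarrow>\<^sub>0 nat"
type_synonym 'a mps = "mono \<Rightarrow> 'a"

definition mps_const :: "'a::zero \<Rightarrow> 'a mps" where
  "mps_const a = (\<lambda>m. if m = 0 then a else 0)"

definition mps_var :: "nat \<Rightarrow> 'a::{zero,one} mps" where
  "mps_var i = (\<lambda>m. if m = Poly_Mapping.single i 1 then 1 else 0)"

definition mps_diff :: "'a::ab_group_add mps \<Rightarrow> 'a mps \<Rightarrow> 'a mps" where
  "mps_diff f g = (\<lambda>m. f m - g m)"

definition mps_mult :: "'a::comm_ring_1 mps \<Rightarrow> 'a mps \<Rightarrow> 'a mps" where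
  "mps_mult f g = (\<lambda>m. \<Sum>(p, q) \<in> {(p, q). p + q = m}. f p * g q)"

definition mps_pow :: "'a::comm_ring_1 mps \<Rightarrow> nat \<Rightarrow> 'a mps" where
  "mps_pow f n = (mps_mult f ^^ n) (mps_const 1)"

definition mono_subst :: "(nat \<Rightarrow> 'a::comm_ring_1 mps) \<Rightarrow> mono \<Rightarrow> 'a mps" where
  "mono_subst g k = foldr (\<lambda>i acc. mps_mult (mps_pow (g i) (Poly_Mapping.lookup k i)) acc)
                       (sorted_list_of_set (Poly_Mapping.keys k)) (mps_const 1)"

text \<open>Substitution f(g 0, g 1, ...); meaningful when the g i have zero constant
  term and only finitely many g i are nonzero (then every coefficient is a finite sum).\<close>
definition mps_subst :: "'a::comm_ring_1 mps \<Rightarrow> (nat \<Rightarrow> 'a mps) \<Rightarrow> 'a mps" where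
  "mps_subst f g = (\<lambda>m. Sum_any (\<lambda>k. f k * mono_subst g k m))"

definition PS :: "nat set \<Rightarrow> 'a::zero mps set" where
  "PS V = {f. \<forall>m. f m \<noteq> 0 \<longrightarrow> Poly_Mapping.keys m \<subseteq> V}"

definition pair_subst :: "'a::comm_ring_1 mps \<Rightarrow> 'a mps \<Rightarrow> nat \<Rightarrow> 'a mps" where
  "pair_subst a b = (\<lambda>i. if i = 0 then a else if i = 1 then b else mps_const 0)"

text \<open>F(X,Y) with X = X 0, Y = X 1 is a (commutative one-dimensional) formal group law.\<close>
definition formal_group_law :: "'a::comm_ring_1 mps \<Rightarrow> bool" where
  "formal_group_law F \<longleftrightarrow>
     F \<in> PS {0, 1} \<and>
     mps_subst F (pair_subst (mps_var 0) (mps_const 0)) = mps_var 0 \<and>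
     mps_subst F (pair_subst (mps_const 0) (mps_var 1)) = mps_var 1 \<and>
     mps_subst F (pair_subst (mps_var 1) (mps_var 0)) = F \<and>
     mps_subst F (pair_subst (mps_subst F (pair_subst (mps_var 0) (mps_var 1))) (mps_var 2))
       = mps_subst F (pair_subst (mps_var 0) (mps_subst F (pair_subst (mps_var 1) (mps_var 2))))"

text \<open>x(a_1 + ... + a_n) in O[[x_1,...,x_n]], where x_(i+1) is the variable X i.\<close>
primrec iter_sum :: "'a::comm_ring_1 mps \<Rightarrow> nat \<Rightarrow> 'a mps" where
  "iter_sum F 0 = mps_const 0"
| "iter_sum F (Suc n) = mps_subst F (pair_subst (iter_sum F n) (mps_var n))"

definition elem_sym :: "nat \<Rightarrow> nat \<Rightarrow> 'a::{zero,one} mps" where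
  "elem_sym d k = (\<lambda>m. if Poly_Mapping.keys m \<subseteq> {..<d} \<and> card (Poly_Mapping.keys m) = k \<and> (\<forall>i. Poly_Mapping.lookup m i \<le> 1)
                        then 1 else 0)"

text \<open>The map O[[c_1..c_d]] -> O[[x_1..x_d]], c_k (variable k) |-> sigma_k.\<close>
definition sym_subst :: "nat \<Rightarrow> nat \<Rightarrow> 'a::comm_ring_1 mps" where
  "sym_subst d = (\<lambda>k. if 1 \<le> k \<and> k \<le> d then elem_sym d k else mps_const 0)"

definition mps_ideal :: "nat set \<Rightarrow> 'a::comm_ring_1 mps \<Rightarrow> 'a mps set" where
  "mps_ideal V s = {mps_mult s h | h. h \<in> PS V}"

end

theory Submission
  imports Defs "HOL-Combinatorics.Transposition"
begin

text \<open>
  Write \<open>s\<close> for a series in \<open>c\<^sub>1, \<dots>, c\<^sub>d\<close> with \<open>s(\<sigma>\<^sub>1, \<dots>, \<sigma>\<^sub>d) = x(a\<^sub>1 + \<dots> + a\<^sub>d)\<close>.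
  It exists because \<open>x(a\<^sub>1 + \<dots> + a\<^sub>d)\<close> is symmetric in the \<open>x(a\<^sub>i)\<close> (by commutativity and
  associativity of the group law), and a symmetric power series is a power series in the
  elementary symmetric functions: homogeneous component by homogeneous component, by induction on
  the number of variables and then on the degree.

  Comparing linear terms, \<open>s = c\<^sub>1 + t\<close> where \<open>t\<close> has neither a constant term nor a term \<open>c\<^sub>1\<close>.
  Giving \<open>c\<^sub>1\<close> weight 1 and \<open>c\<^sub>2, \<dots>, c\<^sub>d\<close> weight 2, \<open>t\<close> has weighted order at least 2, so
  replacing \<open>c\<^sub>1\<close> by \<open>s - t\<close> in the terms of \<open>f\<close> divisible by \<open>c\<^sub>1\<close> gives
  \<open>f = g\<^sub>0 + s h\<^sub>0 + f\<^sub>1\<close> with \<open>g\<^sub>0\<close> free of \<open>c\<^sub>1\<close> and \<open>f\<^sub>1\<close> of higher weighted order. Iterating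
  converges to \<open>f = g + s h\<close>; and \<open>g = s h\<close> with \<open>g\<close> free of \<open>c\<^sub>1\<close> forces \<open>h = 0\<close>, by looking at
  \<open>c\<^sub>1\<close> times a term of \<open>h\<close> of least weight.
\<close>

abbreviation lookup :: "('b \<Rightarrow>\<^sub>0 'c::zero) \<Rightarrow> 'b \<Rightarrow> 'c" where "lookup \<equiv> Poly_Mapping.lookup"
abbreviation keys :: "('b \<Rightarrow>\<^sub>0 'c::zero) \<Rightarrow> 'b set" where "keys \<equiv> Poly_Mapping.keys"

lemma finite_bounded_monos:
  assumes "finite S"
  shows "finite {p::mono. keys p \<subseteq> S \<and> (\<forall>i. lookup p i \<le> (N::nat))}"
proof -
  have "finite {f::nat\<Rightarrow>nat. \<forall>x. (x \<in> S \<longrightarrow> f x \<in> {0..N}) \<and> (x \<notin> S \<longrightarrow> f x = 0)}"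
    by (rule finite_set_of_finite_funs) (use assms in auto)
  moreover have "lookup ` {p::mono. keys p \<subseteq> S \<and> (\<forall>i. lookup p i \<le> N)}
     \<subseteq> {f::nat\<Rightarrow>nat. \<forall>x. (x \<in> S \<longrightarrow> f x \<in> {0..N}) \<and> (x \<notin> S \<longrightarrow> f x = 0)}"
    by (auto simp: in_keys_iff)
  ultimately have "finite (lookup ` {p::mono. keys p \<subseteq> S \<and> (\<forall>i. lookup p i \<le> N)})"
    by (rule finite_subset[rotated])
  then show ?thesis
    by (rule finite_imageD) (auto simp: inj_on_def poly_mapping_eqI)
qed

definition mono_divisors :: "mono \<Rightarrow> mono set" where
  "mono_divisors m = {p. \<exists>q. m = p + q}"

lemma finite_mono_divisors: "finite (mono_divisors m)"
proof -
  have "mono_divisors m \<subseteq> {p::mono. keys p \<subseteq> keys m \<and> (\<forall>i. lookup p i \<le> Max (lookup m ` keys m))}"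
  proof (clarsimp simp: mono_divisors_def, intro conjI allI)
    fix q :: mono and p
    show "keys p \<subseteq> keys (p + q)" by (auto simp: in_keys_iff lookup_add)
  next
    fix q p :: mono and i
    show "lookup p i \<le> Max (lookup (p + q) ` keys (p + q))"
    proof (cases "i \<in> keys (p+q)")
      case True
      then have "lookup (p+q) i \<le> Max (lookup (p + q) ` keys (p + q))" by (intro Max_ge) auto
      then show ?thesis by (simp add: lookup_add)
    next
      case False
      then show ?thesis by (simp add: in_keys_iff lookup_add)
    qed
  qed
  then show ?thesis by (rule finite_subset) (rule finite_bounded_monos, simp)
qed

lemma mono_divisors_trans: "p \<in> mono_divisors m \<Longrightarrow> q \<in> mono_divisors p \<Longrightarrow> q \<in> mono_divisors m"
  by (auto simp: mono_divisors_def add.assoc)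

lemma mono_divisors_self: "m \<in> mono_divisors m"
  by (auto simp: mono_divisors_def intro: exI[of _ 0])

definition mono_splits :: "mono \<Rightarrow> (mono \<times> mono) set" where
  "mono_splits m = {(p, q). p + q = m}"

lemma mono_splits_subset: "mono_splits m \<subseteq> mono_divisors m \<times> mono_divisors m"
  by (auto simp: mono_splits_def mono_divisors_def) (metis add.commute)

lemma finite_mono_splits: "finite (mono_splits m)"
  using finite_subset[OF mono_splits_subset] finite_mono_divisors by blast

lemma mono_splits_divisors: "(p, q) \<in> mono_splits m \<Longrightarrow> p \<in> mono_divisors m \<and> q \<in> mono_divisors m"
  using mono_splits_subset by blast

lemma finite_add_eq_pairs [simp]: "finite {(p, q). p + q = (m::mono)}"
  using finite_mono_splits[of m] by (simp add: mono_splits_def)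

lemma sum_mono_splits_single:
  assumes "\<And>p q. (p, q) \<in> mono_splits m \<Longrightarrow> p \<noteq> k \<Longrightarrow> g p q = 0"
  shows "(\<Sum>(p, q)\<in>mono_splits m. g p q) = (if k \<in> mono_divisors m then g k (m - k) else 0)"
proof (cases "k \<in> mono_divisors m")
  case True
  then obtain r where r: "m = k + r" by (auto simp: mono_divisors_def)
  have "(\<Sum>(p, q)\<in>mono_splits m. g p q) = (\<Sum>x\<in>{(k, r)}. case x of (p, q) \<Rightarrow> g p q)"
    by (rule sum.mono_neutral_right) (auto simp: finite_mono_splits mono_splits_def r intro: assms)
  then show ?thesis using True r by simp
next
  case False
  then show ?thesis using assms
    by (auto intro!: sum.neutral simp: mono_splits_def mono_divisors_def)
qed

lemma keys_add_mono: "keys (p + q :: mono) = keys p \<union> keys q"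
  by (auto simp: in_keys_iff lookup_add)

lemma mono_splits_keys: "(p, q) \<in> mono_splits m \<Longrightarrow> keys p \<subseteq> keys m \<and> keys q \<subseteq> keys m"
  by (auto simp: mono_splits_def keys_add_mono)

definition wdeg :: "(nat \<Rightarrow> nat) \<Rightarrow> mono \<Rightarrow> nat" where
  "wdeg w m = (\<Sum>i\<in>keys m. w i * lookup m i)"

lemma wdeg_superset: "finite S \<Longrightarrow> keys m \<subseteq> S \<Longrightarrow> wdeg w m = (\<Sum>i\<in>S. w i * lookup m i)"
  unfolding wdeg_def by (rule sum.mono_neutral_left) (auto simp: in_keys_iff)

lemma wdeg_add: "wdeg w (p + q) = wdeg w p + wdeg w q"
proof -
  have "wdeg w (p + q) = (\<Sum>i\<in>keys p \<union> keys q. w i * lookup (p + q) i)"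
    by (rule wdeg_superset) (auto simp: keys_add_mono)
  also have "\<dots> = (\<Sum>i\<in>keys p \<union> keys q. w i * lookup p i) + (\<Sum>i\<in>keys p \<union> keys q. w i * lookup q i)"
    by (simp add: lookup_add algebra_simps sum.distrib)
  also have "\<dots> = wdeg w p + wdeg w q"
    by (simp add: wdeg_superset[of "keys p \<union> keys q" p] wdeg_superset[of "keys p \<union> keys q" q])
  finally show ?thesis .
qed

lemma wdeg_zero [simp]: "wdeg w 0 = 0"
  by (simp add: wdeg_def)

lemma wdeg_single [simp]: "wdeg w (Poly_Mapping.single i n) = w i * n"
  by (cases "n = 0") (simp_all add: wdeg_def)

text \<open>
  The weight of the total degree is a named constant: the simplifier would rewrite \<open>\<lambda>_. 1\<close>
  to \<open>\<lambda>_. Suc 0\<close>, so that lemmas about it would no longer match.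
\<close>

definition unit_weight :: "nat \<Rightarrow> nat" where
  "unit_weight i = 1"

lemma unit_weight [simp]: "unit_weight i = 1"
  by (simp add: unit_weight_def)

abbreviation tdeg :: "mono \<Rightarrow> nat" where "tdeg \<equiv> wdeg unit_weight"

lemma tdeg_eq_0_iff [simp]: "tdeg m = 0 \<longleftrightarrow> m = 0"
proof
  assume "tdeg m = 0"
  then have "\<forall>i\<in>keys m. lookup m i = 0" by (simp add: wdeg_def)
  then show "m = 0" by (metis in_keys_iff keys_eq_empty equals0I)
qed simp

lemma lookup_le_tdeg: "lookup m i \<le> tdeg m"
proof (cases "i \<in> keys m")
  case True
  then show ?thesis unfolding wdeg_def by (simp add: member_le_sum)
qed (simp add: in_keys_iff)

lemma tdeg_eq_1_iff: "tdeg k = 1 \<longleftrightarrow> (\<exists>i. k = Poly_Mapping.single i 1)"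
proof
  assume a: "tdeg k = 1"
  then have "k \<noteq> 0" by auto
  then obtain i where i: "i \<in> keys k" by (metis all_not_in_conv keys_eq_empty)
  have "tdeg k = lookup k i + (\<Sum>x\<in>keys k - {i}. lookup k x)"
    unfolding wdeg_def using i by (simp add: sum.remove)
  moreover have "lookup k i \<ge> 1" using i by (simp add: in_keys_iff)
  ultimately have li: "lookup k i = 1" and rest: "(\<Sum>x\<in>keys k - {i}. lookup k x) = 0" using a by linarith+
  have "lookup k x = 0" if "x \<noteq> i" for x
  proof (rule ccontr)
    assume "lookup k x \<noteq> 0"
    then have "x \<in> keys k - {i}" using that by (simp add: in_keys_iff)
    then have "lookup k x \<le> (\<Sum>x\<in>keys k - {i}. lookup k x)" by (intro member_le_sum) auto
    then show False using rest \<open>lookup k x \<noteq> 0\<close> by simp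
  qed
  then have "k = Poly_Mapping.single i 1"
    by (intro poly_mapping_eqI) (auto simp: lookup_single when_def li)
  then show "\<exists>i. k = Poly_Mapping.single i 1" by blast
qed auto

lemma mono_splits_tdeg: "(p, q) \<in> mono_splits m \<Longrightarrow> tdeg p \<le> tdeg m \<and> tdeg q \<le> tdeg m"
  by (auto simp: mono_splits_def wdeg_add)

definition monos_upto :: "nat set \<Rightarrow> nat \<Rightarrow> mono set" where
  "monos_upto S N = {k. keys k \<subseteq> S \<and> tdeg k \<le> N}"

lemma finite_monos_upto: "finite S \<Longrightarrow> finite (monos_upto S N)"
  by (rule finite_subset[OF _ finite_bounded_monos[of S N]])
     (auto simp: monos_upto_def intro: order.trans[OF lookup_le_tdeg])

lemma monos_upto_0: "monos_upto S 0 = {0}"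
  by (auto simp: monos_upto_def)

lemma monos_upto_01: "monos_upto {0, 1} 1 = {0, Poly_Mapping.single 0 1, Poly_Mapping.single 1 1}"
proof (intro set_eqI iffI)
  fix k assume "k \<in> monos_upto {0, 1} 1"
  then have k: "keys k \<subseteq> {0, 1}" "tdeg k \<le> 1" by (auto simp: monos_upto_def)
  show "k \<in> {0, Poly_Mapping.single 0 1, Poly_Mapping.single 1 1}"
  proof (cases "tdeg k = 0")
    case True then show ?thesis by simp
  next
    case False
    then have "tdeg k = 1" using k(2) by linarith
    then obtain i where "k = Poly_Mapping.single i 1" using tdeg_eq_1_iff by blast
    then show ?thesis using k by auto
  qed
qed (auto simp: monos_upto_def)

abbreviation e0 :: mono where "e0 \<equiv> Poly_Mapping.single 0 (Suc 0)"
abbreviation e1 :: mono where "e1 \<equiv> Poly_Mapping.single (Suc 0) (Suc 0)"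

section \<open>The ring of power series in countably many variables\<close>

definition trunc_poly :: "mono \<Rightarrow> 'a::zero mps \<Rightarrow> (mono \<Rightarrow>\<^sub>0 'a)" where
  "trunc_poly m f = Abs_poly_mapping (\<lambda>p. if p \<in> mono_divisors m then f p else 0)"

lemma lookup_trunc_poly: "lookup (trunc_poly m f) p = (if p \<in> mono_divisors m then f p else 0)"
proof -
  have "finite {p. (if p \<in> mono_divisors m then f p else 0) \<noteq> 0}"
    by (rule finite_subset[OF _ finite_mono_divisors[of m]]) auto
  then show ?thesis unfolding trunc_poly_def by simp
qed

lemma lookup_times_eq_sum_splits:
  fixes A B :: "mono \<Rightarrow>\<^sub>0 'a::comm_ring_1"
  shows "lookup (A * B) m = (\<Sum>(p, q)\<in>mono_splits m. lookup A p * lookup B q)"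
proof -
  have "lookup (A * B) m = (\<Sum>(a, b). lookup A a * lookup B b when m = a + b)"
  proof -
    have "lookup (A * B) m = prod_fun (lookup A) (lookup B) m" by (simp add: lookup_mult prod_fun_def)
    also have "\<dots> = (\<Sum>(a, b). lookup A a * lookup B b when m = a + b)"
      by (rule prod_fun_unfold_prod) simp_all
    finally show ?thesis .
  qed
  also have "\<dots> = (\<Sum>x\<in>mono_splits m. (case x of (a, b) \<Rightarrow> lookup A a * lookup B b when m = a + b))"
    by (rule Sum_any.expand_superset) (auto simp: finite_mono_splits finite_mono_splits[unfolded mono_splits_def] mono_splits_def when_def split: prod.splits if_splits)
  also have "\<dots> = (\<Sum>(p, q)\<in>mono_splits m. lookup A p * lookup B q)"
    by (rule sum.cong) (auto simp: mono_splits_def)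
  finally show ?thesis .
qed

lemma mps_mult_eq_sum_splits: "mps_mult f g m = (\<Sum>(p, q)\<in>mono_splits m. f p * g q)"
  by (simp add: mps_mult_def mono_splits_def)

lemma mps_mult_eq_trunc_poly:
  assumes "m' \<in> mono_divisors m"
  shows "mps_mult f g m' = lookup (trunc_poly m f * trunc_poly m g) m'"
  unfolding mps_mult_eq_sum_splits lookup_times_eq_sum_splits
  by (rule sum.cong) (auto simp: lookup_trunc_poly dest!: mono_splits_divisors intro: mono_divisors_trans[OF assms])

typedef 'a mfps = "UNIV :: 'a mps set" morphisms mcoeff Abs_mfps by simp

setup_lifting type_definition_mfps

lemma mfps_eqI: "(\<And>m. mcoeff a m = mcoeff b m) \<Longrightarrow> a = b"
  by (metis mcoeff_inverse ext)

lemma mcoeff_Abs_mfps [simp]: "mcoeff (Abs_mfps f) = f"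
  by (simp add: Abs_mfps_inverse)

text \<open>
  Associativity of the product is inherited from the polynomial ring \<open>mono \<Rightarrow>\<^sub>0 'a\<close>: the
  coefficient of a product at \<open>m\<close> only involves coefficients at divisors of \<open>m\<close>.
\<close>

instantiation mfps :: (comm_ring_1) comm_ring_1
begin
lift_definition zero_mfps :: "'a mfps" is "mps_const 0" .
lift_definition one_mfps :: "'a mfps" is "mps_const 1" .
lift_definition plus_mfps :: "'a mfps \<Rightarrow> 'a mfps \<Rightarrow> 'a mfps" is "\<lambda>f g m. f m + g m" .
lift_definition minus_mfps :: "'a mfps \<Rightarrow> 'a mfps \<Rightarrow> 'a mfps" is "mps_diff" .
lift_definition uminus_mfps :: "'a mfps \<Rightarrow> 'a mfps" is "\<lambda>f m. - f m" .
lift_definition times_mfps :: "'a mfps \<Rightarrow> 'a mfps \<Rightarrow> 'a mfps" is "mps_mult" .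

lemma mcoeff_mult_eq_trunc_poly: "m' \<in> mono_divisors m \<Longrightarrow> mcoeff (a * b) m' = lookup (trunc_poly m (mcoeff a) * trunc_poly m (mcoeff b)) m'"
  by (simp add: times_mfps.rep_eq mps_mult_eq_trunc_poly)

lemma trunc_poly_one: "trunc_poly m (mps_const (1::'a)) = 1"
  by (rule poly_mapping_eqI) (auto simp: lookup_trunc_poly lookup_one mps_const_def when_def mono_divisors_def)

instance
proof
  fix a b c :: "'a mfps"
  show "a * b * c = a * (b * c)"
  proof (rule mfps_eqI)
    fix m
    have "mcoeff (a * b * c) m = (\<Sum>(p, q)\<in>mono_splits m. mcoeff (a * b) p * mcoeff c q)"
      by (simp add: times_mfps.rep_eq mps_mult_eq_sum_splits)
    also have "\<dots> = (\<Sum>(p, q)\<in>mono_splits m. lookup (trunc_poly m (mcoeff a) * trunc_poly m (mcoeff b)) p * lookup (trunc_poly m (mcoeff c)) q)"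
      by (rule sum.cong) (auto simp: mcoeff_mult_eq_trunc_poly lookup_trunc_poly dest!: mono_splits_divisors)
    also have "\<dots> = lookup (trunc_poly m (mcoeff a) * trunc_poly m (mcoeff b) * trunc_poly m (mcoeff c)) m"
      by (simp add: lookup_times_eq_sum_splits)
    also have "\<dots> = lookup (trunc_poly m (mcoeff a) * (trunc_poly m (mcoeff b) * trunc_poly m (mcoeff c))) m"
      by (simp add: mult.assoc)
    also have "\<dots> = (\<Sum>(p, q)\<in>mono_splits m. lookup (trunc_poly m (mcoeff a)) p * lookup (trunc_poly m (mcoeff b) * trunc_poly m (mcoeff c)) q)"
      by (simp add: lookup_times_eq_sum_splits)
    also have "\<dots> = (\<Sum>(p, q)\<in>mono_splits m. mcoeff a p * mcoeff (b * c) q)"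
      by (rule sum.cong) (auto simp: mcoeff_mult_eq_trunc_poly lookup_trunc_poly dest!: mono_splits_divisors)
    also have "\<dots> = mcoeff (a * (b * c)) m"
      by (simp add: times_mfps.rep_eq mps_mult_eq_sum_splits)
    finally show "mcoeff (a * b * c) m = mcoeff (a * (b * c)) m" .
  qed
  show "a * b = b * a"
  proof (rule mfps_eqI)
    fix m
    show "mcoeff (a * b) m = mcoeff (b * a) m"
      using mcoeff_mult_eq_trunc_poly[OF mono_divisors_self, of a b m] mcoeff_mult_eq_trunc_poly[OF mono_divisors_self, of b a m]
      by (simp add: mult.commute)
  qed
  show "1 * a = a"
  proof (rule mfps_eqI)
    fix m
    show "mcoeff (1 * a) m = mcoeff a m"
      using mcoeff_mult_eq_trunc_poly[OF mono_divisors_self, of 1 a m]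
      by (simp add: one_mfps.rep_eq trunc_poly_one lookup_trunc_poly mono_divisors_self)
  qed
  show "(a + b) * c = a * c + b * c"
    by (rule mfps_eqI) (simp add: times_mfps.rep_eq plus_mfps.rep_eq mps_mult_eq_sum_splits sum.distrib[symmetric]
        distrib_right split_def)
  show "0 + a = a"
    by (rule mfps_eqI) (simp add: plus_mfps.rep_eq zero_mfps.rep_eq mps_const_def)
  show "a + b = b + a"
    by (rule mfps_eqI) (simp add: plus_mfps.rep_eq add.commute)
  show "a + b + c = a + (b + c)"
    by (rule mfps_eqI) (simp add: plus_mfps.rep_eq add.assoc)
  show "- a + a = 0"
    by (rule mfps_eqI) (simp add: plus_mfps.rep_eq uminus_mfps.rep_eq zero_mfps.rep_eq mps_const_def)
  show "a - b = a + - b"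
    by (rule mfps_eqI) (simp add: plus_mfps.rep_eq uminus_mfps.rep_eq minus_mfps.rep_eq mps_diff_def)
  show "(0::'a mfps) \<noteq> 1"
  proof
    assume "(0::'a mfps) = 1"
    then have "mcoeff (0::'a mfps) 0 = mcoeff 1 0" by simp
    then show False by (simp add: zero_mfps.rep_eq one_mfps.rep_eq mps_const_def)
  qed
qed
end

lemma mcoeff_add [simp]: "mcoeff (a + b) m = mcoeff a m + mcoeff b m"
  by (simp add: plus_mfps.rep_eq)

lemma mcoeff_diff [simp]: "mcoeff (a - b) m = mcoeff a m - mcoeff b m"
  by (simp add: minus_mfps.rep_eq mps_diff_def)

lemma mcoeff_uminus [simp]: "mcoeff (- a) m = - mcoeff a m"
  by (simp add: uminus_mfps.rep_eq)

lemma mcoeff_zero [simp]: "mcoeff 0 m = 0"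
  by (simp add: zero_mfps.rep_eq mps_const_def)

lemma mcoeff_one: "mcoeff 1 m = (if m = 0 then 1 else 0)"
  by (simp add: one_mfps.rep_eq mps_const_def)

lemma mcoeff_mult: "mcoeff (a * b) m = (\<Sum>(p, q)\<in>mono_splits m. mcoeff a p * mcoeff b q)"
  by (simp add: times_mfps.rep_eq mps_mult_eq_sum_splits)

lemma mcoeff_sum: "mcoeff (sum f A) m = (\<Sum>x\<in>A. mcoeff (f x) m)"
  by (induction A rule: infinite_finite_induct) auto

lemma mcoeff_mult_eq: "mcoeff (a * b) = mps_mult (mcoeff a) (mcoeff b)"
  by (simp add: times_mfps.rep_eq)

lemma mcoeff_one_eq: "mcoeff 1 = mps_const 1"
  by (simp add: one_mfps.rep_eq)

lemma mcoeff_zero_eq: "mcoeff 0 = mps_const 0"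
  by (simp add: zero_mfps.rep_eq)

lemma mcoeff_power_eq: "mcoeff (a ^ n) = mps_pow (mcoeff a) n"
  by (induction n) (simp_all add: mps_pow_def mcoeff_one_eq mcoeff_mult_eq)

definition mconst :: "'a::comm_ring_1 \<Rightarrow> 'a mfps" where "mconst c = Abs_mfps (mps_const c)"

definition mmonom :: "mono \<Rightarrow> 'a::comm_ring_1 mfps" where "mmonom k = Abs_mfps (\<lambda>m. if m = k then 1 else 0)"

definition mvar :: "nat \<Rightarrow> 'a::comm_ring_1 mfps" where "mvar i = mmonom (Poly_Mapping.single i 1)"

lemma mcoeff_mconst: "mcoeff (mconst c) m = (if m = 0 then c else 0)"
  by (simp add: mconst_def mps_const_def)

lemma mcoeff_mmonom: "mcoeff (mmonom k) m = (if m = k then 1 else 0)"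
  by (simp add: mmonom_def)

lemma mcoeff_mmonom_mult: "mcoeff (mmonom k * a) m = (if k \<in> mono_divisors m then mcoeff a (m - k) else 0)"
  unfolding mcoeff_mult
  by (subst sum_mono_splits_single[of m k]) (auto simp: mcoeff_mmonom)

lemma mcoeff_mconst_mult: "mcoeff (mconst c * a) m = c * mcoeff a m"
  unfolding mcoeff_mult
  by (subst sum_mono_splits_single[of m 0]) (auto simp: mcoeff_mconst mono_divisors_def)

lemma mmonom_0 [simp]: "mmonom 0 = 1" by (rule mfps_eqI) (simp add: mcoeff_mmonom mcoeff_one)

lemma mconst_mult: "mconst (a * b) = mconst a * mconst b"
  by (rule mfps_eqI) (simp add: mcoeff_mconst_mult mcoeff_mconst)

lemma mmonom_mult: "mmonom p * mmonom q = mmonom (p + q)"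
proof (rule mfps_eqI)
  fix m
  show "mcoeff (mmonom p * mmonom q) m = mcoeff (mmonom (p + q)) m"
    by (auto simp: mcoeff_mmonom_mult mcoeff_mmonom mono_divisors_def)
qed

definition mono_quot :: "mono \<Rightarrow> 'a::comm_ring_1 mfps \<Rightarrow> 'a mfps" where
  "mono_quot k x = Abs_mfps (\<lambda>m. mcoeff x (m + k))"

lemma mcoeff_mono_quot [simp]: "mcoeff (mono_quot k x) m = mcoeff x (m + k)"
  by (simp add: mono_quot_def)

lemma mmonom_mult_mono_quot:
  assumes "\<And>m. mcoeff x m \<noteq> 0 \<Longrightarrow> k \<in> mono_divisors m"
  shows "mmonom k * mono_quot k x = x"
proof (rule mfps_eqI)
  fix m
  show "mcoeff (mmonom k * mono_quot k x) m = mcoeff x m"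
  proof (cases "k \<in> mono_divisors m")
    case True
    then obtain q where "m = k + q" by (auto simp: mono_divisors_def)
    then show ?thesis using True by (simp add: mcoeff_mmonom_mult add.commute)
  next
    case False
    then show ?thesis using assms by (auto simp: mcoeff_mmonom_mult)
  qed
qed

definition ord_ge :: "(nat \<Rightarrow> nat) \<Rightarrow> 'a::comm_ring_1 mfps \<Rightarrow> nat \<Rightarrow> bool" where
  "ord_ge w a n \<longleftrightarrow> (\<forall>m. wdeg w m < n \<longrightarrow> mcoeff a m = 0)"

lemma ord_ge_mult: "ord_ge w a A \<Longrightarrow> ord_ge w b B \<Longrightarrow> ord_ge w (a * b) (A + B)"
  unfolding ord_ge_def mcoeff_mult
proof (intro allI impI sum.neutral ballI, clarify)
  fix m p q
  assume a: "\<forall>m. wdeg w m < A \<longrightarrow> mcoeff a m = 0" and b: "\<forall>m. wdeg w m < B \<longrightarrow> mcoeff b m = 0"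
    and "wdeg w m < A + B" and "(p, q) \<in> mono_splits m"
  then have "wdeg w p < A \<or> wdeg w q < B" by (auto simp: mono_splits_def wdeg_add)
  then show "mcoeff a p * mcoeff b q = 0" using a b by auto
qed

lemma ord_ge_0: "ord_ge w a 0"
  by (simp add: ord_ge_def)

lemma ord_ge_mono: "ord_ge w a A \<Longrightarrow> B \<le> A \<Longrightarrow> ord_ge w a B"
  by (auto simp: ord_ge_def)

lemma ord_ge_power: "ord_ge w a A \<Longrightarrow> ord_ge w (a ^ n) (n * A)"
  by (induction n) (simp_all add: ord_ge_0 ord_ge_mult)

lemma ord_ge_prod: "(\<And>i. i \<in> I \<Longrightarrow> ord_ge w (g i) (n i)) \<Longrightarrow> ord_ge w (\<Prod>i\<in>I. g i) (\<Sum>i\<in>I. n i)"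
  by (induction I rule: infinite_finite_induct) (simp_all add: ord_ge_0 ord_ge_mult)

lemma ord_ge_mono_quot: "ord_ge w x A \<Longrightarrow> ord_ge w (mono_quot k x) (A - wdeg w k)"
  by (auto simp: ord_ge_def wdeg_add)

definition homogeneous :: "(nat \<Rightarrow> nat) \<Rightarrow> nat \<Rightarrow> 'a::comm_ring_1 mfps \<Rightarrow> bool" where
  "homogeneous w n x \<longleftrightarrow> (\<forall>m. mcoeff x m \<noteq> 0 \<longrightarrow> wdeg w m = n)"

lemma homogeneous_mult: "homogeneous w A a \<Longrightarrow> homogeneous w B b \<Longrightarrow> homogeneous w (A + B) (a * b)"
proof (unfold homogeneous_def, intro allI impI)
  fix m assume a: "\<forall>m. mcoeff a m \<noteq> 0 \<longrightarrow> wdeg w m = A" and b: "\<forall>m. mcoeff b m \<noteq> 0 \<longrightarrow> wdeg w m = B"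
  assume "mcoeff (a * b) m \<noteq> 0"
  then obtain p q where pq: "(p, q) \<in> mono_splits m" "mcoeff a p * mcoeff b q \<noteq> 0"
    unfolding mcoeff_mult by (auto elim!: sum.not_neutral_contains_not_neutral)
  have "mcoeff a p \<noteq> 0" "mcoeff b q \<noteq> 0" using pq(2) by auto
  then show "wdeg w m = A + B" using a b pq(1) by (auto simp: mono_splits_def wdeg_add)
qed

lemma homogeneous_one: "homogeneous w 0 1"
  by (simp add: homogeneous_def mcoeff_one)

lemma homogeneous_power: "homogeneous w A a \<Longrightarrow> homogeneous w (n * A) (a ^ n)"
  by (induction n) (simp_all add: homogeneous_one homogeneous_mult)

lemma homogeneous_prod:
  "(\<And>i. i \<in> I \<Longrightarrow> homogeneous w (n i) (g i)) \<Longrightarrow> homogeneous w (\<Sum>i\<in>I. n i) (\<Prod>i\<in>I. g i)"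
  by (induction I rule: infinite_finite_induct) (simp_all add: homogeneous_one homogeneous_mult)

lemma homogeneous_add: "homogeneous w n a \<Longrightarrow> homogeneous w n b \<Longrightarrow> homogeneous w n (a + b)"
  by (auto simp: homogeneous_def) (metis add.right_neutral)

lemma homogeneous_diff: "homogeneous w n a \<Longrightarrow> homogeneous w n b \<Longrightarrow> homogeneous w n (a - b)"
  by (auto simp: homogeneous_def) (metis diff_self)

lemma homogeneous_mvar: "homogeneous w (w i) (mvar i)"
  by (simp add: homogeneous_def mvar_def mcoeff_mmonom)

lemma homogeneous_mono_quot: "homogeneous w n x \<Longrightarrow> homogeneous w (n - wdeg w k) (mono_quot k x)"
  by (auto simp: homogeneous_def wdeg_add)

lemma mmonom_mult_homogeneous_eq_0:
  assumes "homogeneous unit_weight n (mmonom k * x)" and "n < tdeg k"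
  shows "mmonom k * x = 0"
proof (rule mfps_eqI)
  fix m
  show "mcoeff (mmonom k * x) m = mcoeff 0 m"
  proof (rule ccontr)
    assume nz: "mcoeff (mmonom k * x) m \<noteq> mcoeff 0 m"
    then obtain q where "m = k + q"
      by (auto simp: mcoeff_mmonom_mult mono_divisors_def split: if_splits)
    then have "tdeg k \<le> tdeg m" by (simp add: wdeg_add)
    moreover have "tdeg m = n" using assms(1) nz by (simp add: homogeneous_def)
    ultimately show False using assms(2) by simp
  qed
qed

section \<open>Substitution\<close>

text \<open>
  Substituting series without constant terms, only finitely many of them nonzero, for the
  variables; then every coefficient of \<^const>\<open>mps_subst\<close> is a finite sum.
\<close>

definition substitutable :: "(nat \<Rightarrow> 'a::comm_ring_1 mfps) \<Rightarrow> bool" where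
  "substitutable h \<longleftrightarrow> (\<forall>i. mcoeff (h i) 0 = 0) \<and> finite {i. h i \<noteq> 0}"

definition mono_eval :: "(nat \<Rightarrow> 'a::comm_ring_1 mfps) \<Rightarrow> mono \<Rightarrow> 'a mfps" where
  "mono_eval h k = (\<Prod>i\<in>keys k. h i ^ lookup k i)"

definition msubst :: "'a::comm_ring_1 mfps \<Rightarrow> (nat \<Rightarrow> 'a mfps) \<Rightarrow> 'a mfps" where
  "msubst f h = Abs_mfps (mps_subst (mcoeff f) (\<lambda>i. mcoeff (h i)))"

lemma foldr_mono_subst:
  "distinct xs \<Longrightarrow> foldr (\<lambda>i acc. mps_mult (mps_pow (mcoeff (h i)) (lookup k i)) acc) xs (mps_const 1)
     = mcoeff (\<Prod>i\<in>set xs. h i ^ lookup k i)"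
  by (induction xs) (simp_all add: mcoeff_one_eq mcoeff_mult_eq mcoeff_power_eq)

lemma mono_subst_eq_mono_eval: "mono_subst (\<lambda>i. mcoeff (h i)) k = mcoeff (mono_eval h k)"
  unfolding mono_subst_def mono_eval_def
  by (subst foldr_mono_subst) simp_all

lemma ord_ge_mono_eval:
  assumes "substitutable h"
  shows "ord_ge unit_weight (mono_eval h k) (tdeg k)"
proof -
  have "ord_ge unit_weight (h i) 1" for i
    using assms by (auto simp: ord_ge_def substitutable_def)
  then have "ord_ge unit_weight (\<Prod>i\<in>keys k. h i ^ lookup k i) (\<Sum>i\<in>keys k. lookup k i * 1)"
    by (intro ord_ge_prod ord_ge_power)
  then show ?thesis by (simp add: mono_eval_def wdeg_def mult.commute)
qed

lemma homogeneous_mono_eval: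
  assumes "\<And>i. homogeneous v (w i) (h i)"
  shows "homogeneous v (wdeg w k) (mono_eval h k)"
proof -
  have "homogeneous v (\<Sum>i\<in>keys k. lookup k i * w i) (\<Prod>i\<in>keys k. h i ^ lookup k i)"
    by (intro homogeneous_prod homogeneous_power assms)
  then show ?thesis by (simp add: mono_eval_def wdeg_def mult.commute)
qed

lemma mono_eval_eq_0: assumes "i \<in> keys k" "h i = 0" shows "mono_eval h k = 0"
proof -
  have "h i ^ lookup k i = 0" using assms by (simp add: in_keys_iff zero_power)
  then show ?thesis unfolding mono_eval_def using assms(1) by (metis finite_keys prod_zero)
qed

lemma mono_eval_0 [simp]: "mono_eval h 0 = 1" by (simp add: mono_eval_def)

lemma mono_eval_add: "mono_eval h (p + q) = mono_eval h p * mono_eval h q"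
proof -
  have fin: "finite (keys p \<union> keys q)" by simp
  have e: "mono_eval h r = (\<Prod>i\<in>keys p \<union> keys q. h i ^ lookup r i)" if "keys r \<subseteq> keys p \<union> keys q" for r
    unfolding mono_eval_def using that by (intro prod.mono_neutral_left) (auto simp: in_keys_iff)
  show ?thesis
    by (simp add: e keys_add_mono lookup_add power_add prod.distrib)
qed

lemma mono_eval_single: "mono_eval h (Poly_Mapping.single i 1) = h i"
  by (simp add: mono_eval_def)

lemma mcoeff_msubst_finite:
  assumes h: "substitutable h" and S: "finite S" "{i. h i \<noteq> 0} \<subseteq> S" and N: "tdeg m \<le> N"
  shows "mcoeff (msubst f h) m = (\<Sum>k\<in>monos_upto S N. mcoeff f k * mcoeff (mono_eval h k) m)"
proof -
  have "mcoeff (msubst f h) m = Sum_any (\<lambda>k. mcoeff f k * mcoeff (mono_eval h k) m)"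
    by (simp add: msubst_def mps_subst_def mono_subst_eq_mono_eval)
  also have "\<dots> = (\<Sum>k\<in>monos_upto S N. mcoeff f k * mcoeff (mono_eval h k) m)"
  proof (rule Sum_any.expand_superset[OF finite_monos_upto[OF S(1)]], clarify)
    fix k assume nz: "mcoeff f k * mcoeff (mono_eval h k) m \<noteq> 0"
    show "k \<in> monos_upto S N"
    proof (rule ccontr)
      assume "k \<notin> monos_upto S N"
      then consider i where "i \<in> keys k" "i \<notin> S" | "tdeg k > N" by (auto simp: monos_upto_def)
      then show False
      proof cases
        case 1
        then have "h i = 0" using S by auto
        with 1 nz show False by (simp add: mono_eval_eq_0)
      next
        case 2
        then show False using nz ord_ge_mono_eval[OF h, of k] N by (auto simp: ord_ge_def)
      qed
    qed
  qed
  finally show ?thesis .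
qed

lemma substitutable_finite: "substitutable h \<Longrightarrow> finite {i. h i \<noteq> 0}" by (simp add: substitutable_def)

lemma mcoeff_msubst:
  "substitutable h \<Longrightarrow> tdeg m \<le> N \<Longrightarrow> mcoeff (msubst f h) m = (\<Sum>k\<in>monos_upto {i. h i \<noteq> 0} N. mcoeff f k * mcoeff (mono_eval h k) m)"
  by (rule mcoeff_msubst_finite) (auto simp: substitutable_def)

lemma msubst_add: "substitutable h \<Longrightarrow> msubst (a + b) h = msubst a h + msubst b h"
  by (rule mfps_eqI) (simp add: mcoeff_msubst[OF _ order_refl] distrib_right sum.distrib)

lemma msubst_zero [simp]: "substitutable h \<Longrightarrow> msubst 0 h = 0"
  by (rule mfps_eqI) (simp add: mcoeff_msubst[OF _ order_refl])

lemma msubst_sum: "substitutable h \<Longrightarrow> msubst (\<Sum>x\<in>A. g x) h = (\<Sum>x\<in>A. msubst (g x) h)"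
  by (induction A rule: infinite_finite_induct) (simp_all add: msubst_add)

lemma msubst_mconst_mult: "substitutable h \<Longrightarrow> msubst (mconst c * a) h = mconst c * msubst a h"
  by (rule mfps_eqI) (simp add: mcoeff_msubst[OF _ order_refl] mcoeff_mconst_mult sum_distrib_left mult.assoc)

lemma msubst_mmonom: assumes "substitutable h" shows "msubst (mmonom k) h = mono_eval h k"
proof (rule mfps_eqI)
  fix m
  let ?K = "monos_upto {i. h i \<noteq> 0} (tdeg m)"
  have "mcoeff (msubst (mmonom k) h) m = (\<Sum>k'\<in>?K. (if k' = k then 1 else 0) * mcoeff (mono_eval h k') m)"
    using mcoeff_msubst[OF assms order_refl] by (simp add: mcoeff_mmonom)
  also have "\<dots> = (if k \<in> ?K then mcoeff (mono_eval h k) m else 0)"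
    by (simp add: if_distrib[of "\<lambda>x. x * _"] sum.delta[OF finite_monos_upto[OF substitutable_finite[OF assms]]] cong: if_cong)
  also have "\<dots> = mcoeff (mono_eval h k) m"
  proof -
    have "mcoeff (mono_eval h k) m = 0" if "k \<notin> ?K"
    proof -
      from that consider i where "i \<in> keys k" "h i = 0" | "tdeg k > tdeg m" by (auto simp: monos_upto_def)
      then show ?thesis
      proof cases
        case 1 then show ?thesis by (simp add: mono_eval_eq_0)
      next
        case 2 then show ?thesis using ord_ge_mono_eval[OF assms, of k] by (auto simp: ord_ge_def)
      qed
    qed
    then show ?thesis by auto
  qed
  finally show "mcoeff (msubst (mmonom k) h) m = mcoeff (mono_eval h k) m" .
qed

lemma msubst_one [simp]: "substitutable h \<Longrightarrow> msubst 1 h = 1"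
  using msubst_mmonom[of h 0] by simp

lemma msubst_mvar [simp]: "substitutable h \<Longrightarrow> msubst (mvar i) h = h i"
  unfolding mvar_def by (simp only: msubst_mmonom mono_eval_single)

lemma msubst_mconst [simp]: "substitutable h \<Longrightarrow> msubst (mconst c) h = mconst c"
  using msubst_mconst_mult[of h c 1] by simp

text \<open>
  Multiplicativity and associativity of substitution are checked degree by degree, where
  only a polynomial truncation of the substituted series matters.
\<close>

definition trunc_deg :: "nat set \<Rightarrow> nat \<Rightarrow> 'a::comm_ring_1 mfps \<Rightarrow> 'a mfps" where
  "trunc_deg S N a = (\<Sum>k\<in>monos_upto S N. mconst (mcoeff a k) * mmonom k)"

lemma mcoeff_trunc_deg: "finite S \<Longrightarrow> mcoeff (trunc_deg S N a) m = (if m \<in> monos_upto S N then mcoeff a m else 0)"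
  unfolding trunc_deg_def mcoeff_sum
  by (simp add: mcoeff_mconst_mult mcoeff_mmonom finite_monos_upto if_distrib[of "\<lambda>x. _ * x"] cong: if_cong)

definition agree_upto :: "nat \<Rightarrow> 'a::comm_ring_1 mfps \<Rightarrow> 'a mfps \<Rightarrow> bool" where
  "agree_upto N x y \<longleftrightarrow> (\<forall>m. tdeg m \<le> N \<longrightarrow> mcoeff x m = mcoeff y m)"

lemma agree_upto_msubst:
  assumes h: "substitutable h" and S: "finite S" "{i. h i \<noteq> 0} \<subseteq> S" and eq: "\<And>k. k \<in> monos_upto S N \<Longrightarrow> mcoeff x k = mcoeff y k"
  shows "agree_upto N (msubst x h) (msubst y h)"
  unfolding agree_upto_def by (auto simp: mcoeff_msubst_finite[OF h S] eq)

lemma agree_upto_msubst_trunc_deg: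
  assumes h: "substitutable h" and S: "finite S" "{i. h i \<noteq> 0} \<subseteq> S"
  shows "agree_upto N (msubst a h) (msubst (trunc_deg S N a) h)"
  by (rule agree_upto_msubst[OF h S]) (simp add: mcoeff_trunc_deg S)

lemma agree_upto_mult: "agree_upto N x x' \<Longrightarrow> agree_upto N y y' \<Longrightarrow> agree_upto N (x * y) (x' * y')"
  unfolding agree_upto_def mcoeff_mult
proof (intro allI impI sum.cong refl, clarify)
  fix m p q assume a: "\<forall>m. tdeg m \<le> N \<longrightarrow> mcoeff x m = mcoeff x' m" "\<forall>m. tdeg m \<le> N \<longrightarrow> mcoeff y m = mcoeff y' m"
    and "tdeg m \<le> N" "(p, q) \<in> mono_splits m"
  then have "tdeg p \<le> N" "tdeg q \<le> N" using mono_splits_tdeg by force+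
  then show "mcoeff x p * mcoeff y q = mcoeff x' p * mcoeff y' q" using a by simp
qed

lemma agree_upto_trans [trans]: "agree_upto N x y \<Longrightarrow> agree_upto N y z \<Longrightarrow> agree_upto N x z"
  by (simp add: agree_upto_def)

lemma agree_upto_sym: "agree_upto N x y \<Longrightarrow> agree_upto N y x"
  by (simp add: agree_upto_def)

lemma agree_upto_all: "(\<And>N. agree_upto N x y) \<Longrightarrow> x = y"
  by (rule mfps_eqI) (auto simp: agree_upto_def)

lemma msubst_trunc_deg:
  "substitutable h \<Longrightarrow> msubst (trunc_deg S N a) h = (\<Sum>k\<in>monos_upto S N. mconst (mcoeff a k) * mono_eval h k)"
  by (simp add: trunc_deg_def msubst_sum msubst_mconst_mult msubst_mmonom)

lemma mcoeff_mult_trunc_deg: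
  assumes S: "finite S" and k: "k \<in> monos_upto S N"
  shows "mcoeff (a * b) k = mcoeff (trunc_deg S N a * trunc_deg S N b) k"
  unfolding mcoeff_mult
proof (rule sum.cong[OF refl], clarify)
  fix p q assume "(p, q) \<in> mono_splits k"
  then have "p \<in> monos_upto S N" "q \<in> monos_upto S N" using k mono_splits_tdeg[of p q k] mono_splits_keys[of p q k]
    by (auto simp: monos_upto_def)
  then show "mcoeff a p * mcoeff b q = mcoeff (trunc_deg S N a) p * mcoeff (trunc_deg S N b) q"
    by (simp add: mcoeff_trunc_deg S)
qed

lemma msubst_trunc_deg_mult:
  assumes h: "substitutable h" and S: "finite S"
  shows "msubst (trunc_deg S N a * trunc_deg S N b) h = msubst (trunc_deg S N a) h * msubst (trunc_deg S N b) h"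
proof -
  have "trunc_deg S N a * trunc_deg S N b = (\<Sum>p\<in>monos_upto S N. \<Sum>q\<in>monos_upto S N. mconst (mcoeff a p * mcoeff b q) * mmonom (p + q))"
    unfolding trunc_deg_def sum_product
    by (intro sum.cong refl) (simp add: mconst_mult mmonom_mult[symmetric] algebra_simps)
  then have "msubst (trunc_deg S N a * trunc_deg S N b) h
      = (\<Sum>p\<in>monos_upto S N. \<Sum>q\<in>monos_upto S N. mconst (mcoeff a p * mcoeff b q) * mono_eval h (p + q))"
    by (simp add: msubst_sum msubst_mconst_mult msubst_mmonom h)
  also have "\<dots> = (\<Sum>k\<in>monos_upto S N. mconst (mcoeff a k) * mono_eval h k) * (\<Sum>k\<in>monos_upto S N. mconst (mcoeff b k) * mono_eval h k)"
    unfolding sum_product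
    by (intro sum.cong refl) (simp add: mconst_mult mono_eval_add algebra_simps)
  finally show ?thesis by (simp add: msubst_trunc_deg h)
qed

lemma msubst_mult:
  assumes h: "substitutable h"
  shows "msubst (a * b) h = msubst a h * msubst b h"
proof (rule agree_upto_all)
  fix N
  let ?S = "{i. h i \<noteq> 0}"
  have S: "finite ?S" "?S \<subseteq> ?S" using h by (auto simp: substitutable_def)
  have "agree_upto N (msubst (a * b) h) (msubst (trunc_deg ?S N a * trunc_deg ?S N b) h)"
    by (rule agree_upto_msubst[OF h S]) (rule mcoeff_mult_trunc_deg[OF S(1)])
  also have "msubst (trunc_deg ?S N a * trunc_deg ?S N b) h = msubst (trunc_deg ?S N a) h * msubst (trunc_deg ?S N b) h"
    by (rule msubst_trunc_deg_mult[OF h S(1)])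
  also have "agree_upto N \<dots> (msubst a h * msubst b h)"
    by (rule agree_upto_mult; rule agree_upto_sym, rule agree_upto_msubst_trunc_deg[OF h S])
  finally show "agree_upto N (msubst (a * b) h) (msubst a h * msubst b h)" .
qed

lemma msubst_power: "substitutable h \<Longrightarrow> msubst (a ^ n) h = msubst a h ^ n"
  by (induction n) (simp_all add: msubst_mult)

lemma msubst_prod: "substitutable h \<Longrightarrow> msubst (\<Prod>x\<in>A. g x) h = (\<Prod>x\<in>A. msubst (g x) h)"
  by (induction A rule: infinite_finite_induct) (simp_all add: msubst_mult)

lemma msubst_mono_eval: "substitutable h \<Longrightarrow> msubst (mono_eval g k) h = mono_eval (\<lambda>i. msubst (g i) h) k"
  by (simp add: mono_eval_def msubst_prod msubst_power)

lemma mcoeff_msubst_0: assumes h: "substitutable h" shows "mcoeff (msubst x h) 0 = mcoeff x 0"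
proof -
  have "mcoeff (msubst x h) 0 = (\<Sum>k\<in>monos_upto {i. h i \<noteq> 0} 0. mcoeff x k * mcoeff (mono_eval h k) 0)"
    by (rule mcoeff_msubst[OF h]) simp
  then show ?thesis by (simp add: monos_upto_0 mcoeff_one)
qed

lemma substitutable_msubst: assumes g: "substitutable g" and h: "substitutable h" shows "substitutable (\<lambda>i. msubst (g i) h)"
proof -
  have "{i. msubst (g i) h \<noteq> 0} \<subseteq> {i. g i \<noteq> 0}" using h by auto
  then show ?thesis using g h by (auto simp: substitutable_def mcoeff_msubst_0 intro: finite_subset)
qed

lemma msubst_msubst:
  assumes g: "substitutable g" and h: "substitutable h"
  shows "msubst (msubst f g) h = msubst f (\<lambda>i. msubst (g i) h)"
proof (rule agree_upto_all)
  fix N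
  let ?Sg = "{i. g i \<noteq> 0}" and ?Sh = "{i. h i \<noteq> 0}"
  let ?gh = "\<lambda>i. msubst (g i) h"
  let ?P = "trunc_deg ?Sg N f"
  have Sg: "finite ?Sg" "?Sg \<subseteq> ?Sg" using g by (auto simp: substitutable_def)
  have Sh: "finite ?Sh" "?Sh \<subseteq> ?Sh" using h by (auto simp: substitutable_def)
  have gh: "substitutable ?gh" by (rule substitutable_msubst[OF g h])
  have "agree_upto N (msubst f g) (msubst ?P g)"
    by (rule agree_upto_msubst_trunc_deg[OF g Sg])
  then have "agree_upto N (msubst (msubst f g) h) (msubst (msubst ?P g) h)"
    by (intro agree_upto_msubst[OF h Sh]) (auto simp: agree_upto_def monos_upto_def)
  also have "msubst (msubst ?P g) h = msubst ?P ?gh"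
    by (simp add: msubst_trunc_deg g gh msubst_sum msubst_mconst_mult h msubst_mono_eval)
  also have "agree_upto N \<dots> (msubst f ?gh)"
    by (rule agree_upto_sym, rule agree_upto_msubst_trunc_deg[OF gh Sg(1)]) (use h in auto)
  finally show "agree_upto N (msubst (msubst f g) h) (msubst f ?gh)" .
qed

section \<open>Coefficient operators commuting with substitution\<close>

definition coeff_op :: "(mono \<Rightarrow> bool) \<Rightarrow> (mono \<Rightarrow> mono) \<Rightarrow> 'a::comm_ring_1 mfps \<Rightarrow> 'a mfps" where
  "coeff_op P \<pi> x = Abs_mfps (\<lambda>m. if P m then mcoeff x (\<pi> m) else 0)"

lemma mcoeff_coeff_op: "mcoeff (coeff_op P \<pi> x) m = (if P m then mcoeff x (\<pi> m) else 0)"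
  by (simp add: coeff_op_def)

lemma coeff_op_zero [simp]: "coeff_op P \<pi> 0 = 0"
  by (rule mfps_eqI) (simp add: mcoeff_coeff_op)

lemma coeff_op_diff: "coeff_op P \<pi> (x - y) = coeff_op P \<pi> x - coeff_op P \<pi> y"
  by (rule mfps_eqI) (simp add: mcoeff_coeff_op)

lemma coeff_op_mono_eval:
  assumes mult: "\<And>x y :: 'a::comm_ring_1 mfps. coeff_op P \<pi> (x * y) = coeff_op P \<pi> x * coeff_op P \<pi> y"
    and one: "coeff_op P \<pi> (1 :: 'a mfps) = 1"
  shows "coeff_op P \<pi> (mono_eval (h :: nat \<Rightarrow> 'a mfps) k) = mono_eval (\<lambda>i. coeff_op P \<pi> (h i)) k"
proof -
  have pow: "coeff_op P \<pi> ((x :: 'a mfps) ^ n) = coeff_op P \<pi> x ^ n" for x n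
    by (induction n) (simp_all add: mult one)
  have prod: "coeff_op P \<pi> (\<Prod>i\<in>A. (g i :: 'a mfps)) = (\<Prod>i\<in>A. coeff_op P \<pi> (g i))" for A g
    by (induction A rule: infinite_finite_induct) (simp_all add: mult one)
  show ?thesis by (simp add: mono_eval_def prod pow)
qed

lemma substitutable_coeff_op:
  assumes deg: "\<And>m. tdeg (\<pi> m) \<le> tdeg m" and h: "substitutable h"
  shows "substitutable (\<lambda>i. coeff_op P \<pi> (h i))"
proof -
  have pi0: "\<pi> 0 = 0" using deg[of 0] by simp
  have "{i. coeff_op P \<pi> (h i) \<noteq> 0} \<subseteq> {i. h i \<noteq> 0}" by auto
  then show ?thesis using h by (auto simp: substitutable_def mcoeff_coeff_op pi0 intro: finite_subset)
qed

lemma coeff_op_msubst: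
  assumes mult: "\<And>x y :: 'a::comm_ring_1 mfps. coeff_op P \<pi> (x * y) = coeff_op P \<pi> x * coeff_op P \<pi> y"
    and one: "coeff_op P \<pi> (1 :: 'a mfps) = 1"
    and deg: "\<And>m. tdeg (\<pi> m) \<le> tdeg m" and h: "substitutable (h :: nat \<Rightarrow> 'a mfps)"
  shows "coeff_op P \<pi> (msubst f h) = msubst f (\<lambda>i. coeff_op P \<pi> (h i))"
proof (rule mfps_eqI)
  fix m
  let ?S = "{i. h i \<noteq> 0}"
  have S: "finite ?S" using h by (simp add: substitutable_def)
  have S2: "{i. coeff_op P \<pi> (h i) \<noteq> 0} \<subseteq> ?S" by auto
  have "mcoeff (coeff_op P \<pi> (msubst f h)) m = (if P m then (\<Sum>k\<in>monos_upto ?S (tdeg m). mcoeff f k * mcoeff (mono_eval h k) (\<pi> m)) else 0)"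
    by (simp add: mcoeff_coeff_op mcoeff_msubst_finite[OF h S order_refl deg])
  also have "\<dots> = (\<Sum>k\<in>monos_upto ?S (tdeg m). mcoeff f k * mcoeff (coeff_op P \<pi> (mono_eval h k)) m)"
    by (simp add: mcoeff_coeff_op)
  also have "\<dots> = mcoeff (msubst f (\<lambda>i. coeff_op P \<pi> (h i))) m"
    by (simp add: mcoeff_msubst_finite[OF substitutable_coeff_op[OF deg h] S S2 order_refl] coeff_op_mono_eval[OF mult one])
  finally show "mcoeff (coeff_op P \<pi> (msubst f h)) m = mcoeff (msubst f (\<lambda>i. coeff_op P \<pi> (h i))) m" .
qed

definition mono_swap :: "nat \<Rightarrow> nat \<Rightarrow> mono \<Rightarrow> mono" where
  "mono_swap i j m = Abs_poly_mapping (\<lambda>x. lookup m (transpose i j x))"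

lemma lookup_mono_swap [simp]: "lookup (mono_swap i j m) x = lookup m (transpose i j x)"
proof -
  have "{x. lookup m (transpose i j x) \<noteq> 0} = transpose i j ` keys m"
  proof (intro set_eqI iffI)
    fix x assume "x \<in> {x. lookup m (transpose i j x) \<noteq> 0}"
    then show "x \<in> transpose i j ` keys m" by (intro image_eqI[of _ _ "transpose i j x"]) (simp_all add: in_keys_iff)
  next
    fix x assume "x \<in> transpose i j ` keys m" then show "x \<in> {x. lookup m (transpose i j x) \<noteq> 0}" by (auto simp: in_keys_iff)
  qed
  then have "finite {x. lookup m (transpose i j x) \<noteq> 0}" by simp
  then show ?thesis by (simp add: mono_swap_def)
qed

lemma mono_swap_mono_swap [simp]: "mono_swap i j (mono_swap i j m) = m"
  by (rule poly_mapping_eqI) simp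

lemma mono_swap_add: "mono_swap i j (p + q) = mono_swap i j p + mono_swap i j q"
  by (rule poly_mapping_eqI) (simp add: lookup_add)

lemma mono_swap_0 [simp]: "mono_swap i j 0 = 0"
  by (rule poly_mapping_eqI) simp

lemma keys_mono_swap: "keys (mono_swap i j m) = transpose i j ` keys m"
proof (intro set_eqI iffI)
  fix x assume "x \<in> keys (mono_swap i j m)"
  then show "x \<in> transpose i j ` keys m" by (intro image_eqI[of _ _ "transpose i j x"]) (simp_all add: in_keys_iff)
next
  fix x assume "x \<in> transpose i j ` keys m" then show "x \<in> keys (mono_swap i j m)" by (auto simp: in_keys_iff)
qed

lemma tdeg_mono_swap: "tdeg (mono_swap i j m) = tdeg m"
proof -
  have "tdeg (mono_swap i j m) = (\<Sum>x\<in>transpose i j ` keys m. lookup m (transpose i j x))"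
    by (simp add: wdeg_def keys_mono_swap)
  also have "\<dots> = (\<Sum>x\<in>keys m. lookup m (transpose i j (transpose i j x)))"
    by (subst sum.reindex) (auto intro: inj_on_subset[OF bij_is_inj[OF bij_transpose]])
  finally show ?thesis by (simp add: wdeg_def)
qed

lemma mono_swap_commute: "mono_swap i j = mono_swap j i"
  by (rule ext, rule poly_mapping_eqI) (simp add: transpose_def)

abbreviation swap_vars :: "nat \<Rightarrow> nat \<Rightarrow> 'a::comm_ring_1 mfps \<Rightarrow> 'a mfps" where
  "swap_vars i j \<equiv> coeff_op (\<lambda>_. True) (mono_swap i j)"

lemma swap_vars_mult: "swap_vars i j (x * y) = swap_vars i j x * swap_vars i j y"
proof (rule mfps_eqI)
  fix m
  have "mcoeff (swap_vars i j (x * y)) m = (\<Sum>(p, q)\<in>mono_splits (mono_swap i j m). mcoeff x p * mcoeff y q)"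
    by (simp add: mcoeff_coeff_op mcoeff_mult)
  also have "\<dots> = (\<Sum>(p, q)\<in>mono_splits m. mcoeff x (mono_swap i j p) * mcoeff y (mono_swap i j q))"
    by (rule sum.reindex_bij_witness[of _ "\<lambda>(p, q). (mono_swap i j p, mono_swap i j q)" "\<lambda>(p, q). (mono_swap i j p, mono_swap i j q)"])
       (auto simp: mono_splits_def mono_swap_add[symmetric])
  also have "\<dots> = mcoeff (swap_vars i j x * swap_vars i j y) m"
    by (simp add: mcoeff_coeff_op mcoeff_mult)
  finally show "mcoeff (swap_vars i j (x * y)) m = mcoeff (swap_vars i j x * swap_vars i j y) m" .
qed

lemma swap_vars_one: "swap_vars i j 1 = 1"
  by (rule mfps_eqI) (simp add: mcoeff_coeff_op mcoeff_one, metis mono_swap_0 mono_swap_mono_swap)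

lemma swap_vars_msubst: "substitutable h \<Longrightarrow> swap_vars i j (msubst f h) = msubst f (\<lambda>k. swap_vars i j (h k))"
  by (rule coeff_op_msubst[OF swap_vars_mult swap_vars_one]) (simp only: tdeg_mono_swap order_refl)

lemma transpose_eq_conv: "transpose i j x = k \<longleftrightarrow> x = transpose i j k"
  by (metis transpose_involutory)

lemma mono_swap_single: "mono_swap i j (Poly_Mapping.single k n) = Poly_Mapping.single (transpose i j k) n"
  by (rule poly_mapping_eqI) (simp add: lookup_single when_def transpose_eq_conv eq_commute[of k])

lemma swap_vars_mvar: "swap_vars i j (mvar k) = mvar (transpose i j k)"
proof (rule mfps_eqI)
  fix m
  have "(mono_swap i j m = Poly_Mapping.single k 1) \<longleftrightarrow> (m = Poly_Mapping.single (transpose i j k) 1)"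
    by (metis mono_swap_mono_swap mono_swap_single)
  then show "mcoeff (swap_vars i j (mvar k)) m = mcoeff (mvar (transpose i j k)) m"
    by (simp add: mcoeff_coeff_op mvar_def mcoeff_mmonom)
qed

lemma swap_vars_id: assumes "\<And>m. mcoeff x m \<noteq> 0 \<Longrightarrow> i \<notin> keys m \<and> j \<notin> keys m" shows "swap_vars i j x = x"
proof (rule mfps_eqI)
  fix m
  show "mcoeff (swap_vars i j x) m = mcoeff x m"
  proof (cases "i \<in> keys m \<or> j \<in> keys m")
    case True
    then have "i \<in> keys (mono_swap i j m) \<or> j \<in> keys (mono_swap i j m)"
      by (auto simp: keys_mono_swap image_iff transpose_def)
    then have b: "mcoeff x (mono_swap i j m) = 0" using assms[of "mono_swap i j m"] by blast
    have a: "mcoeff x m = 0" using assms[of m] True by blast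
    show ?thesis by (simp add: mcoeff_coeff_op a b)
  next
    case False
    then have "mono_swap i j m = m"
      by (intro poly_mapping_eqI) (auto simp: transpose_def in_keys_iff)
    then show ?thesis by (simp add: mcoeff_coeff_op)
  qed
qed

lemma swap_vars_conj:
  assumes "\<And>x. transpose i j x = transpose a b (transpose c d (transpose a b x))"
  shows "swap_vars i j y = swap_vars a b (swap_vars c d (swap_vars a b y))"
proof (rule mfps_eqI)
  fix m
  have "mono_swap a b (mono_swap c d (mono_swap a b m)) = mono_swap i j m"
    by (rule poly_mapping_eqI) (simp add: assms)
  then show "mcoeff (swap_vars i j y) m = mcoeff (swap_vars a b (swap_vars c d (swap_vars a b y))) m"
    by (simp add: mcoeff_coeff_op)
qed

lemma swap_vars_same: "swap_vars i i y = y"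
proof (rule mfps_eqI)
  fix m
  have "mono_swap i i m = m" by (rule poly_mapping_eqI) (simp add: transpose_def)
  then show "mcoeff (swap_vars i i y) m = mcoeff y m" by (simp add: mcoeff_coeff_op)
qed

abbreviation zero_var :: "nat \<Rightarrow> 'a::comm_ring_1 mfps \<Rightarrow> 'a mfps" where
  "zero_var d \<equiv> coeff_op (\<lambda>m. d \<notin> keys m) id"

lemma zero_var_mult: "zero_var d (x * y) = zero_var d x * zero_var d y"
proof (rule mfps_eqI)
  fix m
  show "mcoeff (zero_var d (x * y)) m = mcoeff (zero_var d x * zero_var d y) m"
  proof (cases "d \<in> keys m")
    case True
    then show ?thesis
      by (auto simp: mcoeff_coeff_op mcoeff_mult mono_splits_def keys_add_mono intro!: sum.neutral)
  next
    case False
    then show ?thesis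
      by (auto simp: mcoeff_coeff_op mcoeff_mult mono_splits_def keys_add_mono intro!: sum.cong)
  qed
qed

lemma zero_var_one: "zero_var d 1 = 1"
  by (rule mfps_eqI) (auto simp: mcoeff_coeff_op mcoeff_one)

lemma zero_var_msubst: "substitutable h \<Longrightarrow> zero_var d (msubst f h) = msubst f (\<lambda>k. zero_var d (h k))"
  by (rule coeff_op_msubst[OF zero_var_mult zero_var_one]) (simp only: id_apply order_refl)

lemma swap_vars_zero_var: assumes "i < d" "j < d" shows "swap_vars i j (zero_var d x) = zero_var d (swap_vars i j x)"
proof (rule mfps_eqI)
  fix m
  have "d \<in> keys (mono_swap i j m) \<longleftrightarrow> d \<in> keys m"
    using assms by (simp add: in_keys_iff transpose_def)
  then show "mcoeff (swap_vars i j (zero_var d x)) m = mcoeff (zero_var d (swap_vars i j x)) m"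
    by (simp add: mcoeff_coeff_op)
qed

lemma PS_mult: "mcoeff a \<in> PS V \<Longrightarrow> mcoeff b \<in> PS V \<Longrightarrow> mcoeff (a * b) \<in> PS V"
proof (unfold PS_def mem_Collect_eq, intro allI impI)
  fix m assume a: "\<forall>m. mcoeff a m \<noteq> 0 \<longrightarrow> keys m \<subseteq> V" and b: "\<forall>m. mcoeff b m \<noteq> 0 \<longrightarrow> keys m \<subseteq> V"
  assume nz: "mcoeff (a * b) m \<noteq> 0"
  then obtain p q where pq: "(p, q) \<in> mono_splits m" "mcoeff a p * mcoeff b q \<noteq> 0"
    unfolding mcoeff_mult by (auto elim!: sum.not_neutral_contains_not_neutral)
  have "mcoeff a p \<noteq> 0" "mcoeff b q \<noteq> 0" using pq(2) by auto
  then have "keys p \<subseteq> V" "keys q \<subseteq> V" using a b by auto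
  then show "keys m \<subseteq> V" using pq(1) by (auto simp: mono_splits_def keys_add_mono)
qed

lemma PS_one: "mcoeff 1 \<in> PS V"
  by (simp add: PS_def mcoeff_one)

lemma PS_zero: "mcoeff 0 \<in> PS V"
  by (simp add: PS_def)

lemma PS_add: "mcoeff a \<in> PS V \<Longrightarrow> mcoeff b \<in> PS V \<Longrightarrow> mcoeff (a + b) \<in> PS V"
proof (unfold PS_def mem_Collect_eq, intro allI impI)
  fix m assume a: "\<forall>m. mcoeff a m \<noteq> 0 \<longrightarrow> keys m \<subseteq> V" and b: "\<forall>m. mcoeff b m \<noteq> 0 \<longrightarrow> keys m \<subseteq> V"
  assume "mcoeff (a + b) m \<noteq> 0"
  then have "mcoeff a m \<noteq> 0 \<or> mcoeff b m \<noteq> 0" by auto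
  then show "keys m \<subseteq> V" using a b by blast
qed

lemma PS_diff: "mcoeff a \<in> PS V \<Longrightarrow> mcoeff b \<in> PS V \<Longrightarrow> mcoeff (a - b) \<in> PS V"
proof (unfold PS_def mem_Collect_eq, intro allI impI)
  fix m assume a: "\<forall>m. mcoeff a m \<noteq> 0 \<longrightarrow> keys m \<subseteq> V" and b: "\<forall>m. mcoeff b m \<noteq> 0 \<longrightarrow> keys m \<subseteq> V"
  assume "mcoeff (a - b) m \<noteq> 0"
  then have "mcoeff a m \<noteq> 0 \<or> mcoeff b m \<noteq> 0" by auto
  then show "keys m \<subseteq> V" using a b by blast
qed

lemma PS_power: "mcoeff a \<in> PS V \<Longrightarrow> mcoeff (a ^ n) \<in> PS V"
  by (induction n) (simp_all add: PS_one PS_mult)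

lemma PS_prod: "(\<And>i. i \<in> A \<Longrightarrow> mcoeff (g i) \<in> PS V) \<Longrightarrow> mcoeff (\<Prod>i\<in>A. g i) \<in> PS V"
  by (induction A rule: infinite_finite_induct) (simp_all add: PS_one PS_mult)

lemma PS_mvar: "i \<in> V \<Longrightarrow> mcoeff (mvar i) \<in> PS V"
  by (simp add: PS_def mvar_def mcoeff_mmonom)

lemma PS_mono_quot: "mcoeff x \<in> PS V \<Longrightarrow> mcoeff (mono_quot k x) \<in> PS V"
  unfolding PS_def mem_Collect_eq mcoeff_mono_quot by (metis Un_subset_iff keys_add_mono)

lemma PS_mono: "f \<in> PS V \<Longrightarrow> V \<subseteq> W \<Longrightarrow> f \<in> PS W"
  by (auto simp: PS_def)

lemma PS_msubst:
  assumes h: "substitutable h" and V: "\<And>i. mcoeff (h i) \<in> PS V"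
  shows "mcoeff (msubst f h) \<in> PS V"
proof (unfold PS_def mem_Collect_eq, intro allI impI)
  fix m assume nz: "mcoeff (msubst f h) m \<noteq> 0"
  then obtain k where "mcoeff f k * mcoeff (mono_eval h k) m \<noteq> 0"
    unfolding mcoeff_msubst[OF h order_refl] by (auto elim!: sum.not_neutral_contains_not_neutral)
  then have "mcoeff (mono_eval h k) m \<noteq> 0" by auto
  moreover have "mcoeff (mono_eval h k) \<in> PS V"
    unfolding mono_eval_def by (intro PS_prod PS_power V)
  ultimately show "keys m \<subseteq> V" by (auto simp: PS_def)
qed

lemma PS_pointwise:
  assumes "\<And>m. \<exists>n. mcoeff x m = mcoeff (y n) m" and "\<And>n. mcoeff (y n) \<in> PS V"
  shows "mcoeff x \<in> PS V"
  unfolding PS_def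
proof (intro CollectI allI impI)
  fix m assume "mcoeff x m \<noteq> 0"
  moreover obtain n where "mcoeff x m = mcoeff (y n) m" using assms(1) by blast
  ultimately show "keys m \<subseteq> V" using assms(2)[of n] by (simp add: PS_def)
qed

lemma PS_sum: "(\<And>i. i \<in> A \<Longrightarrow> mcoeff (g i) \<in> PS V) \<Longrightarrow> mcoeff (\<Sum>i\<in>A. g i) \<in> PS V"
  by (induction A rule: infinite_finite_induct) (simp_all add: PS_zero PS_add)

lemma mps_ideal_iff:
  "mps_diff f g \<in> mps_ideal V (mcoeff s) \<longleftrightarrow> (\<exists>h. mcoeff h \<in> PS V \<and> Abs_mfps f = Abs_mfps g + s * h)"
proof -
  have "mps_diff f g = mcoeff (Abs_mfps f - Abs_mfps g)"
    by (rule ext) (simp add: mps_diff_def)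
  then have "mps_diff f g \<in> mps_ideal V (mcoeff s) \<longleftrightarrow>
      (\<exists>h. h \<in> PS V \<and> mcoeff (Abs_mfps f - Abs_mfps g) = mcoeff (s * Abs_mfps h))"
    by (auto simp: mps_ideal_def mcoeff_mult_eq)
  also have "\<dots> \<longleftrightarrow> (\<exists>h. mcoeff h \<in> PS V \<and> Abs_mfps f = Abs_mfps g + s * h)"
  proof
    assume "\<exists>h. h \<in> PS V \<and> mcoeff (Abs_mfps f - Abs_mfps g) = mcoeff (s * Abs_mfps h)"
    then obtain h where "h \<in> PS V" "Abs_mfps f - Abs_mfps g = s * Abs_mfps h"
      by (auto simp: mcoeff_inject)
    then show "\<exists>h. mcoeff h \<in> PS V \<and> Abs_mfps f = Abs_mfps g + s * h"
      by (intro exI[of _ "Abs_mfps h"]) (auto simp: algebra_simps)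
  next
    assume "\<exists>h. mcoeff h \<in> PS V \<and> Abs_mfps f = Abs_mfps g + s * h"
    then obtain h where "mcoeff h \<in> PS V" "Abs_mfps f = Abs_mfps g + s * h" by blast
    then show "\<exists>h. h \<in> PS V \<and> mcoeff (Abs_mfps f - Abs_mfps g) = mcoeff (s * Abs_mfps h)"
      by (intro exI[of _ "mcoeff h"]) (simp add: mcoeff_inverse)
  qed
  finally show ?thesis .
qed

section \<open>Formal group laws\<close>

definition subst_pair :: "'a::comm_ring_1 mfps \<Rightarrow> 'a mfps \<Rightarrow> nat \<Rightarrow> 'a mfps" where
  "subst_pair a b = (\<lambda>i. if i = 0 then a else if i = 1 then b else 0)"

lemma subst_pair_0 [simp]: "subst_pair a b 0 = a" and subst_pair_1 [simp]: "subst_pair a b (Suc 0) = b"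
  by (simp_all add: subst_pair_def)

lemma substitutable_subst_pair: "mcoeff a 0 = 0 \<Longrightarrow> mcoeff b 0 = 0 \<Longrightarrow> substitutable (subst_pair a b)"
  unfolding substitutable_def
  by (auto simp: subst_pair_def intro: finite_subset[of _ "{0, 1}"])

lemma msubst_subst_pair: "substitutable h \<Longrightarrow> (\<lambda>i. msubst (subst_pair a b i) h) = subst_pair (msubst a h) (msubst b h)"
  by (rule ext) (simp add: subst_pair_def)

lemma coeff_op_subst_pair: "(\<lambda>i. coeff_op P \<pi> (subst_pair a b i)) = subst_pair (coeff_op P \<pi> a) (coeff_op P \<pi> b)"
  by (rule ext) (simp add: subst_pair_def)

definition subst_triple :: "'a::comm_ring_1 mfps \<Rightarrow> 'a mfps \<Rightarrow> 'a mfps \<Rightarrow> nat \<Rightarrow> 'a mfps" where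
  "subst_triple a b c = (\<lambda>i. if i = 0 then a else if i = 1 then b else if i = 2 then c else 0)"

lemma subst_triple_0 [simp]: "subst_triple a b c 0 = a" and subst_triple_1 [simp]: "subst_triple a b c (Suc 0) = b"
  and subst_triple_2 [simp]: "subst_triple a b c 2 = c"
  by (simp_all add: subst_triple_def)

lemma substitutable_subst_triple: "mcoeff a 0 = 0 \<Longrightarrow> mcoeff b 0 = 0 \<Longrightarrow> mcoeff c 0 = 0 \<Longrightarrow> substitutable (subst_triple a b c)"
  unfolding substitutable_def
  by (auto simp: subst_triple_def intro: finite_subset[of _ "{0, 1, 2}"])

lemma mono_eval_single' [simp]: "mono_eval h (Poly_Mapping.single i (Suc 0)) = h i"
  using mono_eval_single[of h i] by simp

lemma single_Suc_0_neq_0 [simp]: "Poly_Mapping.single i (Suc 0) \<noteq> 0"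
  by (metis lookup_single_eq lookup_zero nat.distinct(1))

lemma mcoeff_mvar_0 [simp]: "mcoeff (mvar i) 0 = 0"
  by (simp add: mvar_def mcoeff_mmonom)

lemma mcoeff_mvar: "mcoeff (mvar i) = mps_var i"
  by (rule ext) (simp add: mvar_def mcoeff_mmonom mps_var_def)

lemma pair_subst_mcoeff: "pair_subst (mcoeff a) (mcoeff b) = (\<lambda>i. mcoeff (subst_pair a b i))"
  by (rule ext) (simp add: subst_pair_def pair_subst_def mcoeff_zero_eq)

lemma mcoeff_msubst_subst_pair:
  "mcoeff (msubst (Abs_mfps f) (subst_pair a b)) = mps_subst f (pair_subst (mcoeff a) (mcoeff b))"
  by (simp add: msubst_def pair_subst_mcoeff)

locale fgl =
  fixes F :: "'a::comm_ring_1 mps"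
  assumes law: "formal_group_law F"
begin

definition FG :: "'a mfps" where "FG = Abs_mfps F"

lemma FG_right_unit: "msubst FG (subst_pair (mvar 0) 0) = mvar 0"
  using law unfolding formal_group_law_def by (simp add: FG_def mcoeff_inject[symmetric] mcoeff_msubst_subst_pair mcoeff_mvar mcoeff_zero_eq)

lemma FG_left_unit: "msubst FG (subst_pair 0 (mvar 1)) = mvar 1"
  using law unfolding formal_group_law_def by (simp add: FG_def mcoeff_inject[symmetric] mcoeff_msubst_subst_pair mcoeff_mvar mcoeff_zero_eq)

lemma FG_swap: "msubst FG (subst_pair (mvar 1) (mvar 0)) = FG"
  using law unfolding formal_group_law_def by (simp add: FG_def mcoeff_inject[symmetric] mcoeff_msubst_subst_pair mcoeff_mvar mcoeff_zero_eq)

lemma FG_assoc_vars: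
  "msubst FG (subst_pair (msubst FG (subst_pair (mvar 0) (mvar 1))) (mvar 2))
    = msubst FG (subst_pair (mvar 0) (msubst FG (subst_pair (mvar 1) (mvar 2))))"
  using law unfolding formal_group_law_def by (simp add: FG_def mcoeff_inject[symmetric] mcoeff_msubst_subst_pair mcoeff_mvar mcoeff_zero_eq)

lemma mcoeff_FG_0: "mcoeff FG 0 = 0"
proof -
  have "mcoeff (msubst FG (subst_pair (mvar 0) 0)) 0 = mcoeff FG 0"
    by (rule mcoeff_msubst_0) (rule substitutable_subst_pair, simp_all)
  then show ?thesis using FG_right_unit by simp
qed

lemma mcoeff_FG_pair_0: "mcoeff a 0 = 0 \<Longrightarrow> mcoeff b 0 = 0 \<Longrightarrow> mcoeff (msubst FG (subst_pair a b)) 0 = 0"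
  by (simp add: mcoeff_msubst_0 substitutable_subst_pair mcoeff_FG_0)

lemma FG_comm:
  assumes a: "mcoeff a 0 = 0" and b: "mcoeff b 0 = 0"
  shows "msubst FG (subst_pair a b) = msubst FG (subst_pair b a)"
proof -
  have n: "substitutable (subst_pair a b)" by (rule substitutable_subst_pair[OF a b])
  have n2: "substitutable (subst_pair (mvar 1) (mvar 0))" by (rule substitutable_subst_pair) simp_all
  have "msubst (msubst FG (subst_pair (mvar 1) (mvar 0))) (subst_pair a b) = msubst FG (\<lambda>i. msubst (subst_pair (mvar 1) (mvar 0) i) (subst_pair a b))"
    by (rule msubst_msubst[OF n2 n])
  also have "(\<lambda>i. msubst (subst_pair (mvar 1) (mvar 0) i) (subst_pair a b)) = subst_pair b a"
    unfolding msubst_subst_pair[OF n] by (simp add: n)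
  finally have "msubst (msubst FG (subst_pair (mvar 1) (mvar 0))) (subst_pair a b) = msubst FG (subst_pair b a)" .
  then show ?thesis using FG_swap by simp
qed

lemma FG_assoc:
  assumes a: "mcoeff a 0 = 0" and b: "mcoeff b 0 = 0" and c: "mcoeff c 0 = 0"
  shows "msubst FG (subst_pair (msubst FG (subst_pair a b)) c) = msubst FG (subst_pair a (msubst FG (subst_pair b c)))"
proof -
  let ?T = "subst_triple a b c"
  have abc: "substitutable ?T" by (rule substitutable_subst_triple[OF a b c])
  have n01: "substitutable (subst_pair (mvar 0) (mvar 1))" and n12: "substitutable (subst_pair (mvar 1) (mvar 2))"
    by (rule substitutable_subst_pair, simp_all)+
  have nL: "substitutable (subst_pair (msubst FG (subst_pair (mvar 0) (mvar 1))) (mvar 2))"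
    by (rule substitutable_subst_pair) (simp_all add: mcoeff_FG_pair_0)
  have nR: "substitutable (subst_pair (mvar 0) (msubst FG (subst_pair (mvar 1) (mvar 2))))"
    by (rule substitutable_subst_pair) (simp_all add: mcoeff_FG_pair_0)
  have L: "msubst (msubst FG (subst_pair (msubst FG (subst_pair (mvar 0) (mvar 1))) (mvar 2))) ?T = msubst FG (subst_pair (msubst FG (subst_pair a b)) c)"
    unfolding msubst_msubst[OF nL abc] msubst_subst_pair[OF abc] msubst_msubst[OF n01 abc] msubst_subst_pair[OF abc]
    by (simp add: abc)
  have R: "msubst (msubst FG (subst_pair (mvar 0) (msubst FG (subst_pair (mvar 1) (mvar 2))))) ?T = msubst FG (subst_pair a (msubst FG (subst_pair b c)))"
    unfolding msubst_msubst[OF nR abc] msubst_subst_pair[OF abc] msubst_msubst[OF n12 abc] msubst_subst_pair[OF abc]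
    by (simp add: abc)
  show ?thesis using L R FG_assoc_vars by simp
qed

lemma mcoeff_FG_pair_linear_raw:
  assumes n: "substitutable (subst_pair a b)" and m: "tdeg m \<le> 1"
  shows "mcoeff (msubst FG (subst_pair a b)) m
     = mcoeff FG 0 * mcoeff 1 m + mcoeff FG (Poly_Mapping.single 0 1) * mcoeff a m + mcoeff FG (Poly_Mapping.single 1 1) * mcoeff b m"
proof -
  have S: "{i. subst_pair a b i \<noteq> 0} \<subseteq> {0, 1}" by (auto simp: subst_pair_def split: if_splits)
  have "mcoeff (msubst FG (subst_pair a b)) m = (\<Sum>k\<in>monos_upto {0, 1} 1. mcoeff FG k * mcoeff (mono_eval (subst_pair a b) k) m)"
    by (rule mcoeff_msubst_finite[OF n _ S m]) simp
  also have "\<dots> = mcoeff FG 0 * mcoeff 1 m + mcoeff FG (Poly_Mapping.single 0 1) * mcoeff a m + mcoeff FG (Poly_Mapping.single 1 1) * mcoeff b m"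
  proof -
    have d: "Poly_Mapping.single 0 1 \<noteq> (Poly_Mapping.single 1 1 :: mono)"
      by (metis lookup_single_eq lookup_single_not_eq zero_neq_one)
    have d0: "(0::mono) \<noteq> Poly_Mapping.single i 1" for i
      using single_Suc_0_neq_0[of i] by simp
    show ?thesis unfolding monos_upto_01 using d d0[of 0] d0[of 1]
      by (simp add: algebra_simps)
  qed
  finally show ?thesis .
qed

lemma mcoeff_FG_e0: "mcoeff FG (Poly_Mapping.single 0 1) = 1"
proof -
  have n: "substitutable (subst_pair (mvar 0) 0)" by (rule substitutable_subst_pair) simp_all
  have "mcoeff (msubst FG (subst_pair (mvar 0) 0)) (Poly_Mapping.single 0 1) = mcoeff (mvar 0) (Poly_Mapping.single 0 1)"
    using FG_right_unit by simp
  then show ?thesis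
    by (subst (asm) mcoeff_FG_pair_linear_raw[OF n]) (simp_all add: mcoeff_one mvar_def mcoeff_mmonom del: single_one)
qed

lemma mcoeff_FG_e1: "mcoeff FG (Poly_Mapping.single 1 1) = 1"
proof -
  have n: "substitutable (subst_pair 0 (mvar 1))" by (rule substitutable_subst_pair) simp_all
  have "mcoeff (msubst FG (subst_pair 0 (mvar 1))) (Poly_Mapping.single 1 1) = mcoeff (mvar 1) (Poly_Mapping.single 1 1)"
    using FG_left_unit by simp
  then show ?thesis
    by (subst (asm) mcoeff_FG_pair_linear_raw[OF n]) (simp_all add: mcoeff_one mvar_def mcoeff_mmonom del: single_one)
qed

lemma mcoeff_FG_pair_linear:
  assumes "mcoeff a 0 = 0" "mcoeff b 0 = 0" and m: "tdeg m \<le> 1"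
  shows "mcoeff (msubst FG (subst_pair a b)) m = mcoeff a m + mcoeff b m"
proof (cases "m = 0")
  case True then show ?thesis using assms by (simp add: mcoeff_msubst_0 substitutable_subst_pair mcoeff_FG_0)
next
  case False then show ?thesis
    using mcoeff_FG_pair_linear_raw[OF substitutable_subst_pair[OF assms(1,2)] m] by (simp add: mcoeff_FG_0 mcoeff_FG_e0[simplified] mcoeff_FG_e1[simplified])
qed

definition fgl_sum :: "nat \<Rightarrow> 'a mfps" where "fgl_sum n = Abs_mfps (iter_sum F n)"

lemma mcoeff_fgl_sum: "mcoeff (fgl_sum n) = iter_sum F n"
  by (simp add: fgl_sum_def)

lemma fgl_sum_0: "fgl_sum 0 = 0"
  by (rule mfps_eqI) (simp add: mcoeff_fgl_sum mps_const_def)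

lemma fgl_sum_Suc: "fgl_sum (Suc n) = msubst FG (subst_pair (fgl_sum n) (mvar n))"
  by (simp add: fgl_sum_def FG_def mcoeff_inject[symmetric] mcoeff_msubst_subst_pair mcoeff_mvar)

lemma mcoeff_fgl_sum_0: "mcoeff (fgl_sum n) 0 = 0"
  by (induction n) (simp_all add: fgl_sum_0 fgl_sum_Suc mcoeff_FG_pair_0)

lemma mcoeff_fgl_sum_linear: "tdeg m \<le> 1 \<Longrightarrow> mcoeff (fgl_sum n) m = (\<Sum>i<n. mcoeff (mvar i) m)"
  by (induction n) (simp_all add: fgl_sum_0 fgl_sum_Suc mcoeff_FG_pair_linear mcoeff_fgl_sum_0)

lemma mcoeff_fgl_sum_e0:
  assumes "1 \<le> n"
  shows "mcoeff (fgl_sum n) e0 = 1"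
proof -
  have "e0 = Poly_Mapping.single i 1 \<longleftrightarrow> i = 0" for i
    by (metis lookup_single_eq lookup_single_not_eq one_neq_zero One_nat_def)
  then show ?thesis
    using assms by (simp add: mcoeff_fgl_sum_linear mvar_def mcoeff_mmonom sum.delta)
qed

lemma PS_fgl_sum: "mcoeff (fgl_sum n) \<in> PS {..<n}"
proof (induction n)
  case 0 then show ?case by (simp add: fgl_sum_0 PS_def)
next
  case (Suc n)
  have "mcoeff (subst_pair (fgl_sum n) (mvar n) i) \<in> PS {..<Suc n}" for i
    using PS_mono[OF Suc] by (auto simp: subst_pair_def PS_mvar PS_zero)
  then show ?case unfolding fgl_sum_Suc
    by (intro PS_msubst substitutable_subst_pair) (simp_all add: mcoeff_fgl_sum_0)
qed

lemma swap_vars_fgl_sum_high: assumes "n \<le> i" "n \<le> j" shows "swap_vars i j (fgl_sum n) = fgl_sum n"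
proof (rule swap_vars_id)
  fix m assume "mcoeff (fgl_sum n) m \<noteq> 0"
  then have "keys m \<subseteq> {..<n}" using PS_fgl_sum by (auto simp: PS_def)
  then show "i \<notin> keys m \<and> j \<notin> keys m" using assms by auto
qed

lemma swap_vars_fgl_sum_Suc:
  assumes IH: "swap_vars i j (fgl_sum n) = fgl_sum n" and "i \<noteq> n" "j \<noteq> n"
  shows "swap_vars i j (fgl_sum (Suc n)) = fgl_sum (Suc n)"
proof -
  have n: "substitutable (subst_pair (fgl_sum n) (mvar n))" by (rule substitutable_subst_pair) (simp_all add: mcoeff_fgl_sum_0)
  have "transpose i j n = n" using assms by (simp add: transpose_def)
  then show ?thesis
    unfolding fgl_sum_Suc swap_vars_msubst[OF n] coeff_op_subst_pair IH swap_vars_mvar by simp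
qed

lemma swap_vars_fgl_sum_adjacent: "swap_vars n (Suc n) (fgl_sum (Suc (Suc n))) = fgl_sum (Suc (Suc n))"
proof -
  let ?S = "fgl_sum n"
  have S0: "mcoeff ?S 0 = 0" by (rule mcoeff_fgl_sum_0)
  have e: "fgl_sum (Suc (Suc n)) = msubst FG (subst_pair ?S (msubst FG (subst_pair (mvar n) (mvar (Suc n)))))"
    unfolding fgl_sum_Suc by (rule FG_assoc) (simp_all add: S0)
  have n1: "substitutable (subst_pair ?S (msubst FG (subst_pair (mvar n) (mvar (Suc n)))))"
    by (rule substitutable_subst_pair) (simp_all add: S0 mcoeff_FG_pair_0)
  have n2: "substitutable (subst_pair (mvar n) (mvar (Suc n)))" by (rule substitutable_subst_pair) simp_all
  have hi: "swap_vars n (Suc n) ?S = ?S" by (rule swap_vars_fgl_sum_high) simp_all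
  have "swap_vars n (Suc n) (msubst FG (subst_pair (mvar n) (mvar (Suc n)))) = msubst FG (subst_pair (mvar (Suc n)) (mvar n))"
    unfolding swap_vars_msubst[OF n2] coeff_op_subst_pair swap_vars_mvar by (simp add: transpose_def)
  also have "\<dots> = msubst FG (subst_pair (mvar n) (mvar (Suc n)))"
    by (rule FG_comm) simp_all
  finally have inner: "swap_vars n (Suc n) (msubst FG (subst_pair (mvar n) (mvar (Suc n)))) = msubst FG (subst_pair (mvar n) (mvar (Suc n)))" .
  show ?thesis
    unfolding e swap_vars_msubst[OF n1] coeff_op_subst_pair hi inner ..
qed

lemma swap_vars_fgl_sum: "i < n \<Longrightarrow> j < n \<Longrightarrow> swap_vars i j (fgl_sum n) = fgl_sum n"
proof (induction n arbitrary: i j)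
  case 0 then show ?case by simp
next
  case (Suc n)
  have main: "swap_vars i n (fgl_sum (Suc n)) = fgl_sum (Suc n)" if lt: "i < n" for i
  proof (cases "i = n - 1")
    case True
    then obtain n' where n': "n = Suc n'" using lt by (cases n) auto
    then show ?thesis using swap_vars_fgl_sum_adjacent[of n'] True by simp
  next
    case False
    then obtain n' where n': "n = Suc n'" "i < n'" using lt by (cases n) auto
    have conj: "swap_vars i n y = swap_vars n' n (swap_vars i n' (swap_vars n' n y))" for y :: "'a mfps"
      by (rule swap_vars_conj) (use n' in \<open>auto simp: transpose_def\<close>)
    have a: "swap_vars n' n (fgl_sum (Suc n)) = fgl_sum (Suc n)" using swap_vars_fgl_sum_adjacent[of n'] n' by simp
    have b: "swap_vars i n' (fgl_sum (Suc n)) = fgl_sum (Suc n)"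
      by (rule swap_vars_fgl_sum_Suc) (use Suc.IH n' in auto)
    show ?thesis unfolding conj a b a ..
  qed
  show ?case
  proof (cases "i < n \<and> j < n")
    case True
    then show ?thesis by (intro swap_vars_fgl_sum_Suc Suc.IH) auto
  next
    case False
    then consider "i = n" "j < n" | "j = n" "i < n" | "i = n" "j = n" using Suc.prems by linarith
    then show ?thesis
    proof cases
      case 1 then show ?thesis using main[of j] by (simp add: mono_swap_commute)
    next
      case 2 then show ?thesis using main[of i] by simp
    next
      case 3 then show ?thesis by (simp add: swap_vars_same)
    qed
  qed
qed

end

section \<open>Symmetric power series\<close>

definition esym_mono :: "nat \<Rightarrow> nat \<Rightarrow> mono \<Rightarrow> bool" where
  "esym_mono d k m \<longleftrightarrow> keys m \<subseteq> {..<d} \<and> card (keys m) = k \<and> (\<forall>i. lookup m i \<le> 1)"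

definition esym :: "nat \<Rightarrow> nat \<Rightarrow> 'a::comm_ring_1 mfps" where
  "esym d k = Abs_mfps (elem_sym d k)"

lemma mcoeff_esym: "mcoeff (esym d k) m = (if esym_mono d k m then 1 else 0)"
  by (simp add: esym_def elem_sym_def esym_mono_def)

definition esyms :: "nat \<Rightarrow> nat \<Rightarrow> 'a::comm_ring_1 mfps" where
  "esyms d = (\<lambda>k. if 1 \<le> k \<and> k \<le> d then esym d k else 0)"

lemma mcoeff_esyms: "(\<lambda>i. mcoeff (esyms d i)) = sym_subst d"
  by (rule ext) (simp add: esyms_def sym_subst_def esym_def mcoeff_zero_eq)

lemma esym_mono_tdeg: "esym_mono d k m \<Longrightarrow> tdeg m = k"
proof -
  assume a: "esym_mono d k m"
  have "\<forall>i\<in>keys m. lookup m i = 1" using a by (auto simp: esym_mono_def in_keys_iff le_Suc_eq)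
  then have "tdeg m = (\<Sum>i\<in>keys m. 1)" unfolding wdeg_def by simp
  then show ?thesis using a by (simp add: esym_mono_def)
qed

lemma mcoeff_esym_0: "1 \<le> k \<Longrightarrow> mcoeff (esym d k) 0 = 0"
  by (simp add: mcoeff_esym esym_mono_def)

lemma substitutable_esyms: "substitutable (esyms d :: nat \<Rightarrow> 'a::comm_ring_1 mfps)"
  unfolding substitutable_def
  by (auto simp: esyms_def mcoeff_esym_0 intro: finite_subset[of _ "{1..d}"])

lemma esym_eq_0: "d < k \<Longrightarrow> esym d k = 0"
proof (rule mfps_eqI)
  fix m assume "d < k"
  have "\<not> esym_mono d k m"
  proof
    assume "esym_mono d k m"
    then have "card (keys m) \<le> card {..<d}" "card (keys m) = k"
      using card_mono[of "{..<d}" "keys m"] by (auto simp: esym_mono_def)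
    then show False using \<open>d < k\<close> by simp
  qed
  then show "mcoeff (esym d k) m = mcoeff 0 m" by (simp add: mcoeff_esym)
qed

lemma transpose_less_iff: "i < d \<Longrightarrow> j < d \<Longrightarrow> transpose i j x < d \<longleftrightarrow> x < d"
  by (auto simp: transpose_def)

lemma esym_mono_mono_swap:
  assumes "i < d" "j < d"
  shows "esym_mono d k (mono_swap i j m) \<longleftrightarrow> esym_mono d k m"
proof -
  have "transpose i j ` keys m \<subseteq> {..<d} \<longleftrightarrow> keys m \<subseteq> {..<d}"
    using transpose_less_iff[OF assms] by auto
  moreover have "(\<forall>x. lookup m (transpose i j x) \<le> 1) \<longleftrightarrow> (\<forall>x. lookup m x \<le> 1)"
    by (metis transpose_involutory)
  ultimately show ?thesis
    by (simp add: esym_mono_def keys_mono_swap card_image)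
qed

lemma swap_vars_esym: "i < d \<Longrightarrow> j < d \<Longrightarrow> swap_vars i j (esym d k) = esym d k"
  by (rule mfps_eqI) (simp add: mcoeff_coeff_op mcoeff_esym esym_mono_mono_swap)

lemma swap_vars_esyms: "i < d \<Longrightarrow> j < d \<Longrightarrow> (\<lambda>k. swap_vars i j (esyms d k)) = esyms d"
  by (rule ext) (simp add: esyms_def swap_vars_esym)

lemma zero_var_esym: "zero_var d (esym (Suc d) k) = esym d k"
proof (rule mfps_eqI)
  fix m
  have "(d \<notin> keys m \<and> esym_mono (Suc d) k m) \<longleftrightarrow> esym_mono d k m"
    by (auto simp: esym_mono_def less_Suc_eq)
  then show "mcoeff (zero_var d (esym (Suc d) k)) m = mcoeff (esym d k) m"
    by (auto simp: mcoeff_coeff_op mcoeff_esym)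
qed

lemma zero_var_esyms: "(\<lambda>k. zero_var d (esyms (Suc d) k)) = esyms d"
proof (rule ext)
  fix k
  show "zero_var d (esyms (Suc d) k) = esyms d k"
    by (cases "k = Suc d") (auto simp: esyms_def zero_var_esym esym_eq_0)
qed

definition all_vars :: "nat \<Rightarrow> mono" where
  "all_vars d = Abs_poly_mapping (\<lambda>i. if i < d then 1 else 0)"

lemma lookup_all_vars: "lookup (all_vars d) i = (if i < d then 1 else 0)"
proof -
  have "finite {i. (if i < d then 1 else 0::nat) \<noteq> 0}" by simp
  then show ?thesis by (simp add: all_vars_def)
qed

lemma keys_all_vars: "keys (all_vars d) = {..<d}"
  by (auto simp: in_keys_iff lookup_all_vars split: if_splits)

lemma tdeg_all_vars: "tdeg (all_vars d) = d"
  by (simp add: wdeg_def keys_all_vars lookup_all_vars)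

lemma esym_top: "esym (Suc d) (Suc d) = mmonom (all_vars (Suc d))"
proof (rule mfps_eqI)
  fix m
  have "esym_mono (Suc d) (Suc d) m \<longleftrightarrow> m = all_vars (Suc d)"
  proof
    assume a: "esym_mono (Suc d) (Suc d) m"
    then have "keys m = {..<Suc d}"
      by (intro card_subset_eq) (auto simp: esym_mono_def)
    then show "m = all_vars (Suc d)"
      using a by (intro poly_mapping_eqI) (auto simp: lookup_all_vars esym_mono_def in_keys_iff le_Suc_eq)
  next
    assume "m = all_vars (Suc d)"
    then show "esym_mono (Suc d) (Suc d) m" by (simp add: esym_mono_def keys_all_vars lookup_all_vars)
  qed
  then show "mcoeff (esym (Suc d) (Suc d)) m = mcoeff (mmonom (all_vars (Suc d))) m"
    by (simp add: mcoeff_esym mcoeff_mmonom)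
qed

lemma mono_swap_all_vars: "i < d \<Longrightarrow> j < d \<Longrightarrow> mono_swap i j (all_vars d) = all_vars d"
  by (rule poly_mapping_eqI) (simp add: lookup_all_vars transpose_less_iff)

lemma PS_esyms: "mcoeff (esyms d k) \<in> PS {..<d}"
  by (auto simp: esyms_def PS_def mcoeff_esym esym_mono_def)

lemma homogeneous_esyms: "homogeneous unit_weight k (esyms d k)"
  by (auto simp: homogeneous_def esyms_def mcoeff_esym esym_mono_tdeg)

lemma homogeneous_mono_eval_esyms: "homogeneous unit_weight (wdeg id k) (mono_eval (esyms d) k)"
  by (rule homogeneous_mono_eval) (simp only: id_apply homogeneous_esyms)

lemma homogeneous_msubst_esyms: assumes "homogeneous id n s" shows "homogeneous unit_weight n (msubst s (esyms d))"
proof (unfold homogeneous_def, intro allI impI)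
  fix m assume "mcoeff (msubst s (esyms d)) m \<noteq> 0"
  then obtain k where "mcoeff s k * mcoeff (mono_eval (esyms d) k) m \<noteq> 0"
    unfolding mcoeff_msubst[OF substitutable_esyms order_refl] by (auto elim!: sum.not_neutral_contains_not_neutral)
  then have "mcoeff s k \<noteq> 0" "mcoeff (mono_eval (esyms d) k) m \<noteq> (0::'a)" by auto
  then show "tdeg m = n" using assms homogeneous_mono_eval_esyms[of k d] by (auto simp: homogeneous_def)
qed

definition symmetric :: "nat \<Rightarrow> 'a::comm_ring_1 mfps \<Rightarrow> bool" where
  "symmetric d x \<longleftrightarrow> (\<forall>i j. i < d \<longrightarrow> j < d \<longrightarrow> swap_vars i j x = x)"

lemma symmetric_msubst_esyms: "symmetric d (msubst s (esyms d))"
  by (simp add: symmetric_def swap_vars_msubst[OF substitutable_esyms] swap_vars_esyms)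

lemma PS_zero_var: "mcoeff f \<in> PS {..<Suc d} \<Longrightarrow> mcoeff (zero_var d f) \<in> PS {..<d}"
  by (auto simp: PS_def mcoeff_coeff_op) (metis lessThan_iff less_Suc_eq subsetD)

lemma symmetric_zero_var: "symmetric (Suc d) f \<Longrightarrow> symmetric d (zero_var d f)"
  by (simp add: symmetric_def swap_vars_zero_var)

lemma homogeneous_zero_var: "homogeneous w n f \<Longrightarrow> homogeneous w n (zero_var d f)"
  by (simp add: homogeneous_def mcoeff_coeff_op)

lemma symmetric_mono_quot_all_vars:
  assumes "symmetric d x"
  shows "symmetric d (mono_quot (all_vars d) x)"
  unfolding symmetric_def
proof (intro allI impI mfps_eqI)
  fix i j m assume ij: "i < d" "j < d"
  have "mcoeff (swap_vars i j (mono_quot (all_vars d) x)) m = mcoeff (swap_vars i j x) (m + all_vars d)"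
    using ij by (simp add: mcoeff_coeff_op mono_swap_add mono_swap_all_vars)
  also have "\<dots> = mcoeff (mono_quot (all_vars d) x) m"
    using assms ij by (simp add: symmetric_def)
  finally show "mcoeff (swap_vars i j (mono_quot (all_vars d) x)) m = mcoeff (mono_quot (all_vars d) x) m" .
qed

text \<open>
  A symmetric series in \<open>x\<^sub>0, \<dots>, x\<^sub>d\<close> that vanishes at \<open>x\<^sub>d = 0\<close> also vanishes at \<open>x\<^sub>i = 0\<close>
  for every \<open>i\<close>, so each of its monomials contains every variable.
\<close>

lemma all_vars_divides_symmetric:
  assumes sym: "symmetric (Suc d) x" and zero: "zero_var d x = 0" and nz: "mcoeff x m \<noteq> 0"
  shows "all_vars (Suc d) \<in> mono_divisors m"
proof -
  have zero_d: "mcoeff x m' = 0" if "d \<notin> keys m'" for m'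
    using arg_cong[OF zero, of "\<lambda>x. mcoeff x m'"] that by (simp add: mcoeff_coeff_op)
  have "lookup m i \<noteq> 0" if "i < Suc d" for i
  proof
    assume mi: "lookup m i = 0"
    have "mcoeff x (mono_swap i d m) = mcoeff (swap_vars i d x) m"
      by (simp add: mcoeff_coeff_op)
    also have "\<dots> = mcoeff x m"
      using sym that by (simp add: symmetric_def)
    finally have "mcoeff x (mono_swap i d m) \<noteq> 0" using nz by simp
    moreover have "d \<notin> keys (mono_swap i d m)"
      using mi by (simp add: in_keys_iff)
    ultimately show False using zero_d by blast
  qed
  then have "m = all_vars (Suc d) + (m - all_vars (Suc d))"
    by (intro poly_mapping_eqI) (auto simp: lookup_add lookup_minus lookup_all_vars)
  then show ?thesis by (auto simp: mono_divisors_def)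
qed

lemma homogeneous_in_esyms_0:
  assumes "mcoeff f \<in> PS {..<0}" and "homogeneous unit_weight n f"
  shows "mcoeff f \<in> PS {1..0} \<and> homogeneous id n f \<and> msubst f (esyms 0) = f"
proof -
  have const: "mcoeff f m = 0" if "m \<noteq> 0" for m
    using assms(1) that by (auto simp: PS_def)
  then have "f = mconst (mcoeff f 0)"
    by (intro mfps_eqI) (simp add: mcoeff_mconst)
  then have "msubst f (esyms 0) = f"
    by (metis msubst_mconst substitutable_esyms)
  moreover have "homogeneous id n f"
    unfolding homogeneous_def
  proof (intro allI impI)
    fix m assume "mcoeff f m \<noteq> 0"
    moreover from this have "m = 0" using const by blast
    ultimately show "wdeg id m = n" using assms(2) by (auto simp: homogeneous_def)
  qed
  ultimately show ?thesis using assms(1) by simp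
qed

text \<open>
  The induction step: subtract from \<open>f\<close> the series \<open>s'(\<sigma>\<^sub>1, \<dots>, \<sigma>\<^sub>d)\<close> in \<open>d + 1\<close> variables, where
  \<open>s'\<close> represents \<open>f\<close> at \<open>x\<^sub>d = 0\<close>. The difference is divisible by \<open>\<sigma>\<^sub>d\<^sub>+\<^sub>1 = x\<^sub>0 \<cdots> x\<^sub>d\<close>, and the
  quotient has lower degree.
\<close>

lemma symmetric_in_esyms_remainder:
  assumes f: "mcoeff f \<in> PS {..<Suc d}" "symmetric (Suc d) f" "homogeneous unit_weight n f"
    and s': "homogeneous id n s'" "msubst s' (esyms d) = zero_var d f"
  defines "r \<equiv> f - msubst s' (esyms (Suc d))"
  shows "mcoeff r \<in> PS {..<Suc d}" and "symmetric (Suc d) r" and "homogeneous unit_weight n r"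
    and "mmonom (all_vars (Suc d)) * mono_quot (all_vars (Suc d)) r = r"
proof -
  show "mcoeff r \<in> PS {..<Suc d}"
    unfolding r_def by (intro PS_diff f(1) PS_msubst substitutable_esyms PS_esyms)
  show sym: "symmetric (Suc d) r"
    using f(2) symmetric_msubst_esyms unfolding r_def by (simp add: symmetric_def coeff_op_diff)
  show "homogeneous unit_weight n r"
    unfolding r_def by (intro homogeneous_diff f(3) homogeneous_msubst_esyms s'(1))
  have "zero_var d r = 0"
    by (simp add: r_def coeff_op_diff zero_var_msubst[OF substitutable_esyms] zero_var_esyms s'(2))
  then show "mmonom (all_vars (Suc d)) * mono_quot (all_vars (Suc d)) r = r"
    using all_vars_divides_symmetric[OF sym] by (intro mmonom_mult_mono_quot) blast
qed

lemma msubst_esyms_Suc_split: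
  fixes s' s'' :: "'a::comm_ring_1 mfps"
  shows "msubst (s' + mvar (Suc d) * s'') (esyms (Suc d))
    = msubst s' (esyms (Suc d)) + mmonom (all_vars (Suc d)) * msubst s'' (esyms (Suc d))"
proof -
  have "esyms (Suc d) (Suc d) = (mmonom (all_vars (Suc d)) :: 'a mfps)"
    by (simp add: esyms_def esym_top)
  then show ?thesis
    by (simp add: msubst_add msubst_mult substitutable_esyms)
qed

lemma homogeneous_symmetric_in_esyms_Suc:
  fixes f :: "'a::comm_ring_1 mfps"
  assumes IH: "\<And>n (g::'a mfps). mcoeff g \<in> PS {..<d} \<Longrightarrow> symmetric d g \<Longrightarrow> homogeneous unit_weight n g \<Longrightarrow>
      \<exists>s. mcoeff s \<in> PS {1..d} \<and> homogeneous id n s \<and> msubst s (esyms d) = g"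
  shows "mcoeff f \<in> PS {..<Suc d} \<Longrightarrow> symmetric (Suc d) f \<Longrightarrow> homogeneous unit_weight n f \<Longrightarrow>
      \<exists>s. mcoeff s \<in> PS {1..Suc d} \<and> homogeneous id n s \<and> msubst s (esyms (Suc d)) = f"
proof (induction n arbitrary: f rule: less_induct)
  case (less n f)
  let ?E = "all_vars (Suc d)"
  obtain s' where s': "mcoeff s' \<in> PS {1..d}" "homogeneous id n s'" "msubst s' (esyms d) = zero_var d f"
    using IH[OF PS_zero_var[OF less.prems(1)] symmetric_zero_var[OF less.prems(2)]
        homogeneous_zero_var[OF less.prems(3)]] by blast
  define r where "r = f - msubst s' (esyms (Suc d))"
  note r = symmetric_in_esyms_remainder[OF less.prems s'(2,3), folded r_def]
  have f: "f = msubst s' (esyms (Suc d)) + r"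
    by (simp add: r_def)
  show ?case
  proof (cases "n < Suc d")
    case True
    then have "r = 0"
      using mmonom_mult_homogeneous_eq_0[of n ?E "mono_quot ?E r"] r(3,4) by (simp add: tdeg_all_vars)
    then have "msubst s' (esyms (Suc d)) = f"
      using f by simp
    moreover have "mcoeff s' \<in> PS {1..Suc d}"
      using s'(1) by (rule PS_mono) auto
    ultimately show ?thesis
      using s'(2) by blast
  next
    case False
    then have "n - Suc d < n" by simp
    then obtain s'' where s'': "mcoeff s'' \<in> PS {1..Suc d}" "homogeneous id (n - Suc d) s''"
        "msubst s'' (esyms (Suc d)) = mono_quot ?E r"
      using less.IH[OF _ PS_mono_quot[OF r(1)] symmetric_mono_quot_all_vars[OF r(2)]
          homogeneous_mono_quot[OF r(3), of ?E, unfolded tdeg_all_vars]] by blast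
    have "homogeneous id (id (Suc d) + (n - Suc d)) (mvar (Suc d) * s'')"
      by (rule homogeneous_mult[OF homogeneous_mvar s''(2)])
    then have "homogeneous id n (s' + mvar (Suc d) * s'')"
      using False s'(2) by (intro homogeneous_add) simp_all
    moreover have "mcoeff (s' + mvar (Suc d) * s'') \<in> PS {1..Suc d}"
      using s'(1) s''(1) by (intro PS_add PS_mult PS_mvar) (auto intro: PS_mono)
    moreover have "msubst (s' + mvar (Suc d) * s'') (esyms (Suc d)) = f"
      using f r(4) s''(3) by (simp add: msubst_esyms_Suc_split)
    ultimately show ?thesis by blast
  qed
qed

lemma homogeneous_symmetric_in_esyms:
  assumes "mcoeff f \<in> PS {..<d}" "symmetric d f" "homogeneous unit_weight n f"
  shows "\<exists>s. mcoeff s \<in> PS {1..d} \<and> homogeneous id n s \<and> msubst s (esyms d) = f"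
  using assms
proof (induction d arbitrary: n f)
  case 0
  then show ?case using homogeneous_in_esyms_0 by blast
next
  case (Suc d)
  then show ?case using homogeneous_symmetric_in_esyms_Suc by blast
qed

lemma mcoeff_msubst_esyms_cong:
  fixes s s' :: "'a::comm_ring_1 mfps"
  assumes "\<And>k. wdeg id k = tdeg m \<Longrightarrow> mcoeff s k = mcoeff s' k"
  shows "mcoeff (msubst s (esyms d)) m = mcoeff (msubst s' (esyms d)) m"
proof -
  have "mcoeff s k * mcoeff (mono_eval (esyms d) k) m = mcoeff s' k * mcoeff (mono_eval (esyms d) k) m" for k
  proof (cases "wdeg id k = tdeg m")
    case False
    then have "mcoeff (mono_eval (esyms d) k) m = (0::'a)"
      using homogeneous_mono_eval_esyms[of k d] unfolding homogeneous_def by metis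
    then show ?thesis by simp
  qed (simp add: assms)
  then show ?thesis
    by (simp add: mcoeff_msubst[OF substitutable_esyms order_refl])
qed

definition homog_part :: "nat \<Rightarrow> 'a::comm_ring_1 mfps \<Rightarrow> 'a mfps" where
  "homog_part n f = Abs_mfps (\<lambda>m. if tdeg m = n then mcoeff f m else 0)"

lemma symmetric_homog_part:
  assumes "symmetric d f"
  shows "symmetric d (homog_part n f)"
  unfolding symmetric_def
proof (intro allI impI mfps_eqI)
  fix i j m assume "i < d" "j < d"
  then have "mcoeff f (mono_swap i j m) = mcoeff f m"
    using assms by (metis mcoeff_coeff_op symmetric_def)
  then show "mcoeff (swap_vars i j (homog_part n f)) m = mcoeff (homog_part n f) m"
    by (simp add: mcoeff_coeff_op homog_part_def tdeg_mono_swap)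
qed

lemma symmetric_in_esyms:
  assumes "mcoeff f \<in> PS {..<d}" and "symmetric d f"
  shows "\<exists>s. mcoeff s \<in> PS {1..d} \<and> msubst s (esyms d) = f"
proof -
  have "\<exists>s. mcoeff s \<in> PS {1..d} \<and> homogeneous id n s \<and> msubst s (esyms d) = homog_part n f" for n
    using assms by (intro homogeneous_symmetric_in_esyms symmetric_homog_part)
      (auto simp: PS_def homog_part_def homogeneous_def)
  then obtain S where S: "\<And>n. mcoeff (S n) \<in> PS {1..d}" "\<And>n. homogeneous id n (S n)"
    "\<And>n. msubst (S n) (esyms d) = homog_part n f"
    by metis
  define s where "s = Abs_mfps (\<lambda>k. mcoeff (S (wdeg id k)) k)"
  have "mcoeff s \<in> PS {1..d}"
    using S(1) by (auto simp: s_def PS_def)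
  moreover have "mcoeff (msubst s (esyms d)) m = mcoeff f m" for m
  proof -
    have "mcoeff (msubst s (esyms d)) m = mcoeff (msubst (S (tdeg m)) (esyms d)) m"
      by (rule mcoeff_msubst_esyms_cong) (simp add: s_def)
    then show ?thesis by (simp add: S(3) homog_part_def)
  qed
  ultimately show ?thesis by (metis mfps_eqI)
qed
section \<open>Division by \<open>c\<^sub>1\<close> plus terms of higher weight\<close>

definition c1_weight :: "nat \<Rightarrow> nat" where "c1_weight i = (if i = 1 then 1 else 2)"

abbreviation c1_wdeg :: "mono \<Rightarrow> nat" where "c1_wdeg \<equiv> wdeg c1_weight"

lemma tdeg_le_c1_wdeg: "tdeg m \<le> c1_wdeg m"
  unfolding wdeg_def by (intro sum_mono) (simp add: c1_weight_def)

lemma c1_wdeg_eq_0: "c1_wdeg m = 0 \<Longrightarrow> m = 0"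
  using tdeg_le_c1_wdeg[of m] by simp

lemma c1_wdeg_eq_1: assumes "c1_wdeg m = 1" shows "m = e1"
proof -
  have "tdeg m \<le> 1" using tdeg_le_c1_wdeg[of m] assms by simp
  moreover have "m \<noteq> 0" using assms by auto
  ultimately have "tdeg m = 1" by (cases "tdeg m") auto
  then obtain i where i: "m = Poly_Mapping.single i 1" using tdeg_eq_1_iff by blast
  then have "c1_wdeg m = c1_weight i * 1" by (simp only: wdeg_single)
  then have "c1_weight i = 1" using assms by (metis mult.right_neutral)
  then have "i = 1" by (cases "i = 1") (auto simp: c1_weight_def)
  then show ?thesis using i by simp
qed

lemma c1_wdeg_add_e1 [simp]: "c1_wdeg (m + e1) = Suc (c1_wdeg m)"
  by (simp add: wdeg_add c1_weight_def)

lemma e1_mono_divisors: "e1 \<in> mono_divisors m \<longleftrightarrow> 1 \<in> keys m"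
proof
  assume "e1 \<in> mono_divisors m"
  then obtain q where "m = e1 + q" by (auto simp: mono_divisors_def)
  then show "1 \<in> keys m" by (simp add: keys_add_mono)
next
  assume a: "1 \<in> keys m"
  have "m = e1 + (m - e1)"
    using a by (intro poly_mapping_eqI) (auto simp: lookup_add lookup_minus lookup_single when_def in_keys_iff)
  then show "e1 \<in> mono_divisors m" by (auto simp: mono_divisors_def)
qed

definition c1_free :: "'a::comm_ring_1 mfps \<Rightarrow> 'a mfps" where "c1_free x = Abs_mfps (\<lambda>m. if 1 \<notin> keys m then mcoeff x m else 0)"

lemma c1_split: "x = c1_free x + mvar 1 * mono_quot e1 x"
proof (rule mfps_eqI)
  fix m
  show "mcoeff x m = mcoeff (c1_free x + mvar 1 * mono_quot e1 x) m"
  proof (cases "1 \<in> keys m")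
    case True
    then obtain q where q: "m = e1 + q" using e1_mono_divisors by (auto simp: mono_divisors_def)
    then show ?thesis using True
      by (simp add: c1_free_def mvar_def mcoeff_mmonom_mult e1_mono_divisors add.commute)
  next
    case False
    then show ?thesis by (simp add: c1_free_def mvar_def mcoeff_mmonom_mult e1_mono_divisors)
  qed
qed

lemma PS_c1_free:
  assumes "mcoeff x \<in> PS {1..d}"
  shows "mcoeff (c1_free x) \<in> PS {2..d}"
  unfolding PS_def
proof (intro CollectI allI impI)
  fix m assume "mcoeff (c1_free x) m \<noteq> 0"
  then have "1 \<notin> keys m" "mcoeff x m \<noteq> 0" by (auto simp: c1_free_def split: if_splits)
  then have "keys m \<subseteq> {1..d} - {1}" using assms by (auto simp: PS_def)
  then show "keys m \<subseteq> {2..d}" by auto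
qed

locale c1_divisor =
  fixes s :: "'a::comm_ring_1 mfps" and d :: nat
  assumes sP: "mcoeff s \<in> PS {1..d}" and d1: "1 \<le> d"
    and s0: "mcoeff s 0 = 0" and s1: "mcoeff s e1 = 1"
begin

definition s_tail :: "'a mfps" where "s_tail = s - mvar 1"

lemma ord_ge_s_tail: "ord_ge c1_weight s_tail 2"
proof (unfold ord_ge_def, intro allI impI)
  fix m assume "c1_wdeg m < 2"
  then consider "c1_wdeg m = 0" | "c1_wdeg m = 1" by linarith
  then show "mcoeff s_tail m = 0"
  proof cases
    case 1 then have "m = 0" by (rule c1_wdeg_eq_0)
    then show ?thesis by (simp add: s_tail_def s0)
  next
    case 2 then have "m = e1" by (rule c1_wdeg_eq_1)
    then show ?thesis using s1 by (simp add: s_tail_def mvar_def mcoeff_mmonom)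
  qed
qed

lemma PS_s_tail: "mcoeff s_tail \<in> PS {1..d}"
  unfolding s_tail_def by (intro PS_diff sP PS_mvar) (use d1 in auto)

definition div_step :: "'a mfps \<Rightarrow> 'a mfps" where "div_step x = - (s_tail * mono_quot e1 x)"

lemma div_step_split: "x = c1_free x + s * mono_quot e1 x + div_step x"
proof -
  have "x = c1_free x + mvar 1 * mono_quot e1 x" by (rule c1_split)
  also have "mvar 1 = s - s_tail" by (simp add: s_tail_def)
  finally show ?thesis by (simp add: div_step_def algebra_simps)
qed

lemma ord_ge_div_step: "ord_ge c1_weight x A \<Longrightarrow> ord_ge c1_weight (div_step x) (A + 1)"
proof -
  assume "ord_ge c1_weight x A"
  then have "ord_ge c1_weight (s_tail * mono_quot e1 x) (2 + (A - c1_wdeg e1))"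
    by (intro ord_ge_mult ord_ge_s_tail ord_ge_mono_quot)
  then have "ord_ge c1_weight (s_tail * mono_quot e1 x) (A + 1)"
    by (rule ord_ge_mono) (simp add: c1_weight_def)
  then show ?thesis by (simp add: ord_ge_def div_step_def)
qed

lemma PS_div_step: "mcoeff x \<in> PS {1..d} \<Longrightarrow> mcoeff (div_step x) \<in> PS {1..d}"
proof -
  assume "mcoeff x \<in> PS {1..d}"
  then have "mcoeff (s_tail * mono_quot e1 x) \<in> PS {1..d}" by (rule PS_mult[OF PS_s_tail PS_mono_quot])
  then show ?thesis by (simp add: div_step_def PS_def)
qed

definition div_rem :: "'a mfps \<Rightarrow> nat \<Rightarrow> 'a mfps" where "div_rem f n = (div_step ^^ n) f"

lemma div_rem_Suc: "div_rem f (Suc n) = div_step (div_rem f n)" by (simp add: div_rem_def)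

lemma ord_ge_div_rem: "ord_ge c1_weight (div_rem f n) n"
proof (induction n)
  case 0 then show ?case by (simp add: ord_ge_def)
next
  case (Suc n) then show ?case using ord_ge_div_step[of "div_rem f n" n] by (simp add: div_rem_Suc)
qed

lemma PS_div_rem: "mcoeff f \<in> PS {1..d} \<Longrightarrow> mcoeff (div_rem f n) \<in> PS {1..d}"
proof (induction n)
  case 0 then show ?case by (simp add: div_rem_def)
next
  case (Suc n) then show ?case unfolding div_rem_Suc by (intro PS_div_step) simp
qed

definition rem_sum :: "'a mfps \<Rightarrow> nat \<Rightarrow> 'a mfps" where "rem_sum f N = (\<Sum>n<N. c1_free (div_rem f n))"

definition quot_sum :: "'a mfps \<Rightarrow> nat \<Rightarrow> 'a mfps" where "quot_sum f N = (\<Sum>n<N. mono_quot e1 (div_rem f n))"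

lemma div_rem_identity: "rem_sum f N + s * quot_sum f N + div_rem f N = f"
proof (induction N)
  case 0
  then show ?case by (simp add: rem_sum_def quot_sum_def div_rem_def)
next
  case (Suc N)
  have "rem_sum f (Suc N) + s * quot_sum f (Suc N) + div_rem f (Suc N)
      = rem_sum f N + s * quot_sum f N
        + (c1_free (div_rem f N) + s * mono_quot e1 (div_rem f N) + div_rem f (Suc N))"
    by (simp add: rem_sum_def quot_sum_def algebra_simps)
  also have "c1_free (div_rem f N) + s * mono_quot e1 (div_rem f N) + div_rem f (Suc N) = div_rem f N"
    using div_step_split[of "div_rem f N"] by (simp add: div_rem_Suc)
  finally show ?case using Suc.IH by simp
qed

lemma quot_sum_stable: "c1_wdeg m + 2 \<le> N \<Longrightarrow> mcoeff (quot_sum f N) m = mcoeff (quot_sum f (c1_wdeg m + 2)) m"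
proof (induction N rule: dec_induct)
  case (step N)
  have "mcoeff (div_rem f N) (m + e1) = 0"
    using ord_ge_div_rem[of f N, unfolded ord_ge_def, rule_format, of "m + e1"] step(1) by simp
  then show ?case using step by (simp add: quot_sum_def)
qed simp

text \<open>
  Since the weighted order of \<open>div_rem f n\<close> grows with \<open>n\<close>, the coefficients of
  \<open>rem_sum f N\<close> and \<open>quot_sum f N\<close> at \<open>m\<close> are stable from \<open>N = c1_wdeg m + 2\<close> on;
  \<open>rem f\<close> and \<open>quot f\<close> are their limits.
\<close>

definition rem :: "'a mfps \<Rightarrow> 'a mfps" where
  "rem f = Abs_mfps (\<lambda>m. mcoeff (rem_sum f (c1_wdeg m + 2)) m)"

definition quot :: "'a mfps \<Rightarrow> 'a mfps" where
  "quot f = Abs_mfps (\<lambda>m. mcoeff (quot_sum f (c1_wdeg m + 2)) m)"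

lemma rem_quot_identity: "f = rem f + s * quot f"
proof (rule mfps_eqI)
  fix m
  let ?N = "c1_wdeg m + 2"
  have "mcoeff f m = mcoeff (rem_sum f ?N) m + mcoeff (s * quot_sum f ?N) m + mcoeff (div_rem f ?N) m"
    by (subst div_rem_identity[of f ?N, symmetric]) simp
  also have "mcoeff (div_rem f ?N) m = 0"
    using ord_ge_div_rem[of f ?N] by (simp add: ord_ge_def)
  also have "mcoeff (s * quot_sum f ?N) m = mcoeff (s * quot f) m"
    unfolding mcoeff_mult
  proof (rule sum.cong[OF refl], clarify)
    fix p q assume "(p, q) \<in> mono_splits m"
    then have "c1_wdeg q + 2 \<le> ?N" by (auto simp: mono_splits_def wdeg_add)
    then show "mcoeff s p * mcoeff (quot_sum f ?N) q = mcoeff s p * mcoeff (quot f) q"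
      by (simp only: quot_def mcoeff_Abs_mfps quot_sum_stable[of q ?N f])
  qed
  finally show "mcoeff f m = mcoeff (rem f + s * quot f) m" by (simp add: rem_def)
qed

lemma PS_rem:
  assumes "mcoeff f \<in> PS {1..d}"
  shows "mcoeff (rem f) \<in> PS {2..d}"
proof (rule PS_pointwise)
  show "\<exists>N. mcoeff (rem f) m = mcoeff (rem_sum f N) m" for m
    unfolding rem_def mcoeff_Abs_mfps by blast
  show "mcoeff (rem_sum f N) \<in> PS {2..d}" for N
    unfolding rem_sum_def by (intro PS_sum PS_c1_free PS_div_rem assms)
qed

lemma PS_quot:
  assumes "mcoeff f \<in> PS {1..d}"
  shows "mcoeff (quot f) \<in> PS {1..d}"
proof (rule PS_pointwise)
  show "\<exists>N. mcoeff (quot f) m = mcoeff (quot_sum f N) m" for m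
    unfolding quot_def mcoeff_Abs_mfps by blast
  show "mcoeff (quot_sum f N) \<in> PS {1..d}" for N
    unfolding quot_sum_def by (intro PS_sum PS_mono_quot PS_div_rem assms)
qed

lemma division_unique:
  assumes gP: "mcoeff g \<in> PS {2..d}" and eq: "g = s * h"
  shows "h = 0"
proof (rule ccontr)
  assume "h \<noteq> 0"
  then obtain m0 where "mcoeff h m0 \<noteq> 0" by (metis mcoeff_zero mfps_eqI)
  define w0 where "w0 = (LEAST v. \<exists>m. mcoeff h m \<noteq> 0 \<and> c1_wdeg m = v)"
  have "\<exists>m. mcoeff h m \<noteq> 0 \<and> c1_wdeg m = w0"
    unfolding w0_def by (rule LeastI[of _ "c1_wdeg m0"]) (use \<open>mcoeff h m0 \<noteq> 0\<close> in auto)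
  then obtain m where m: "mcoeff h m \<noteq> 0" "c1_wdeg m = w0" by blast
  have oh: "ord_ge c1_weight h w0"
  proof (unfold ord_ge_def, intro allI impI)
    fix m' assume "c1_wdeg m' < w0"
    then show "mcoeff h m' = 0" unfolding w0_def using not_less_Least by blast
  qed
  have "mcoeff g (m + e1) = 0"
    using gP by (auto simp: PS_def keys_add_mono)
  moreover have "s * h = mvar 1 * h + s_tail * h" by (simp add: s_tail_def algebra_simps)
  then have "mcoeff (s * h) (m + e1) = mcoeff (mvar 1 * h) (m + e1) + mcoeff (s_tail * h) (m + e1)"
    by simp
  moreover have "mcoeff (mvar 1 * h) (m + e1) = mcoeff h m"
    by (simp add: mvar_def mcoeff_mmonom_mult mono_divisors_def add.commute)
  moreover have "mcoeff (s_tail * h) (m + e1) = 0"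
    using ord_ge_mult[OF ord_ge_s_tail oh, unfolded ord_ge_def, rule_format, of "m + e1"] m(2) by simp
  ultimately show False using eq m(1) by simp
qed

lemma division_exists:
  assumes "mcoeff f \<in> PS {1..d}"
  shows "\<exists>g h. mcoeff g \<in> PS {2..d} \<and> mcoeff h \<in> PS {1..d} \<and> f = g + s * h"
  using rem_quot_identity[of f] PS_rem[OF assms] PS_quot[OF assms] by blast

lemma unique_remainder:
  assumes "f \<in> PS {1..d}"
  shows "\<exists>!g. g \<in> PS {2..d} \<and> mps_diff f g \<in> mps_ideal {1..d} (mcoeff s)"
proof -
  obtain g h where g: "mcoeff g \<in> PS {2..d}" and h: "mcoeff h \<in> PS {1..d}"
    and f: "Abs_mfps f = g + s * h"
    using division_exists[of "Abs_mfps f"] assms by auto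
  show ?thesis
  proof (rule ex1I[of _ "mcoeff g"])
    show "mcoeff g \<in> PS {2..d} \<and> mps_diff f (mcoeff g) \<in> mps_ideal {1..d} (mcoeff s)"
      unfolding mps_ideal_iff using g h f by (auto simp: mcoeff_inverse)
  next
    fix g' assume g': "g' \<in> PS {2..d} \<and> mps_diff f g' \<in> mps_ideal {1..d} (mcoeff s)"
    then obtain h' where f': "Abs_mfps f = Abs_mfps g' + s * h'"
      unfolding mps_ideal_iff by blast
    have "Abs_mfps g' - g = s * (h - h')"
      using f f' by (simp add: algebra_simps)
    moreover have "mcoeff (Abs_mfps g' - g) \<in> PS {2..d}"
      using g g' by (intro PS_diff) simp_all
    ultimately have "h - h' = 0"
      by (intro division_unique) auto
    then have "Abs_mfps g' = g" using f f' by simp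
    then show "g' = mcoeff g" by auto
  qed
qed

end

lemma tdeg_le_wdeg_id: assumes "0 \<notin> keys k" shows "tdeg k \<le> wdeg id k"
  unfolding wdeg_def
proof (rule sum_mono)
  fix i assume "i \<in> keys k"
  then have "i \<noteq> 0" using assms by metis
  then show "unit_weight i * lookup k i \<le> id i * lookup k i" by simp
qed

lemma wdeg_id_eq_1:
  assumes "0 \<notin> keys k" and "wdeg id k = 1"
  shows "k = e1"
proof -
  have "k \<noteq> 0" "tdeg k \<le> 1"
    using assms tdeg_le_wdeg_id[of k] by auto
  then have "tdeg k = 1" by (cases "tdeg k") auto
  then obtain i where i: "k = Poly_Mapping.single i 1" using tdeg_eq_1_iff by blast
  then have "i = 1" using assms(2) by (simp only: wdeg_single) simp
  then show ?thesis using i by simp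
qed

lemma mcoeff_msubst_esyms_e0:
  assumes d: "1 \<le> d" and s: "mcoeff s \<in> PS {1..d}"
  shows "mcoeff (msubst s (esyms d)) e0 = mcoeff s e1"
proof -
  let ?K = "monos_upto {i. esyms d i \<noteq> (0::'a mfps)} (tdeg e0)"
  have e0: "esym_mono d 1 e0" using d by (simp add: esym_mono_def lookup_single when_def)
  then have "esyms d 1 \<noteq> (0::'a mfps)"
    using d by (auto simp: esyms_def mcoeff_esym dest: arg_cong[where f = "\<lambda>x. mcoeff x e0"])
  then have e1: "e1 \<in> ?K" by (simp add: monos_upto_def)
  have other: "mcoeff s k * mcoeff (mono_eval (esyms d) k) e0 = 0" if "k \<noteq> e1" for k
  proof (rule ccontr)
    assume "mcoeff s k * mcoeff (mono_eval (esyms d) k) e0 \<noteq> 0"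
    then have "mcoeff s k \<noteq> 0" and eval: "mcoeff (mono_eval (esyms d) k) e0 \<noteq> (0::'a)"
      by auto
    then have "keys k \<subseteq> {1..d}"
      using s unfolding PS_def by blast
    then have "0 \<notin> keys k" by auto
    moreover have "wdeg id k = tdeg e0"
      using eval homogeneous_mono_eval_esyms[of k d] unfolding homogeneous_def by metis
    ultimately have "k = e1"
      by (intro wdeg_id_eq_1) simp_all
    with that show False ..
  qed
  have "mcoeff (msubst s (esyms d)) e0 = (\<Sum>k\<in>?K. mcoeff s k * mcoeff (mono_eval (esyms d) k) e0)"
    by (rule mcoeff_msubst[OF substitutable_esyms order_refl])
  also have "\<dots> = mcoeff s e1 * mcoeff (mono_eval (esyms d) e1) e0"
    using other e1
    by (subst sum.mono_neutral_right[where S = "{e1}"])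
      (auto simp: finite_monos_upto substitutable_finite[OF substitutable_esyms])
  also have "\<dots> = mcoeff s e1"
    using d e0 by (simp add: esyms_def mcoeff_esym)
  finally show ?thesis .
qed

lemma (in fgl) c1_divisor_if_msubst_esyms_eq_fgl_sum:
  assumes "mcoeff s \<in> PS {1..d}" "1 \<le> d" and "msubst s (esyms d) = fgl_sum d"
  shows "c1_divisor s d"
proof
  show "mcoeff s 0 = 0"
    using mcoeff_msubst_0[OF substitutable_esyms, of s d] assms(3) by (simp add: mcoeff_fgl_sum_0)
  show "mcoeff s e1 = 1"
    using mcoeff_msubst_esyms_e0[OF assms(2,1)] assms(3) mcoeff_fgl_sum_e0[OF assms(2)] by simp
qed (use assms in auto)

theorem proposition13p2:
  fixes F :: "'a::comm_ring_1 mps" and d :: nat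
  assumes "formal_group_law F" and "1 \<le> d"
  shows "(\<exists>s \<in> PS {1..d}. mps_subst s (sym_subst d) = iter_sum F d) \<and>
         (\<forall>s \<in> PS {1..d}. mps_subst s (sym_subst d) = iter_sum F d \<longrightarrow>
            (\<forall>f \<in> PS {1..d}. \<exists>!g. g \<in> PS {2..d} \<and> mps_diff f g \<in> mps_ideal {1..d} s))"
proof -
  interpret fgl F by unfold_locales (rule assms(1))
  have subst_iff: "mps_subst s (sym_subst d) = iter_sum F d \<longleftrightarrow> msubst (Abs_mfps s) (esyms d) = fgl_sum d" for s
    by (simp add: msubst_def mcoeff_esyms fgl_sum_def Abs_mfps_inject)
  have "symmetric d (fgl_sum d)"
    by (simp add: symmetric_def swap_vars_fgl_sum)
  then obtain s where "mcoeff s \<in> PS {1..d}" "msubst s (esyms d) = fgl_sum d"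
    using symmetric_in_esyms[OF PS_fgl_sum] by blast
  then have "\<exists>s \<in> PS {1..d}. mps_subst s (sym_subst d) = iter_sum F d"
    by (metis subst_iff mcoeff_inverse)
  moreover have "\<forall>f \<in> PS {1..d}. \<exists>!g. g \<in> PS {2..d} \<and> mps_diff f g \<in> mps_ideal {1..d} s"
    if "s \<in> PS {1..d}" "mps_subst s (sym_subst d) = iter_sum F d" for s
  proof -
    interpret c1_divisor "Abs_mfps s" d
      using c1_divisor_if_msubst_esyms_eq_fgl_sum that assms(2) subst_iff by simp
    show ?thesis using unique_remainder by simp
  qed
  ultimately show ?thesis by blast
qed

end
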